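(* Let $p\ge2$, $\theta\ge1$ and $r_0\ge0$, and write $\phi_p(t)=|t|^{p-2}t$. Let $h_0,h_0'\in\mathbb R$, with $h_0'=0$ if $r_0=0$. Then there exists a unique $\varphi\in C^1[r_0,+\infty)$ with $r^{\theta-1}\phi_p(\varphi')\in C^1[r_0,+\infty)$ solving \[ (r^{\theta-1}\phi_p(\varphi'))'+r^{\theta-1}\phi_p(\varphi)=0\ \ (r\ge r_0),\qquad \varphi(r_0)=h_0,\ \varphi'(r_0)=h_0'. \] *)

theory Defs
  imports "HOL-Analysis.Analysis"
begin

text \<open>phi_p(t) = |t|^(p-2) t.  (Isabelle's 0 powr a = 0 is harmless here, as the factor t vanishes.)\<close>
definition phi_p :: "real \<Rightarrow> real \<Rightarrow> real" where
  "phi_p p t = \<bar>t\<bar> powr (p - 2) * t"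

text \<open>The weight r^(theta-1) for r >= 0, with the convention r^0 = 1 (also at r = 0).\<close>
definition weight :: "real \<Rightarrow> real \<Rightarrow> real" where
  "weight \<theta> r = (if \<theta> = 1 then 1 else r powr (\<theta> - 1))"

definition C1_with_deriv :: "real set \<Rightarrow> (real \<Rightarrow> real) \<Rightarrow> (real \<Rightarrow> real) \<Rightarrow> bool" where
  "C1_with_deriv S f f' \<longleftrightarrow>
     (\<forall>x\<in>S. (f has_real_derivative f' x) (at x within S)) \<and> continuous_on S f'"

definition is_solution ::
  "real \<Rightarrow> real \<Rightarrow> real \<Rightarrow> real \<Rightarrow> real \<Rightarrow> (real \<Rightarrow> real) \<Rightarrow> bool" where
  "is_solution p \<theta> r0 h0 h0' \<phi> \<longleftrightarrow>
     (\<exists>\<phi>' g'.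
        C1_with_deriv {r0..} \<phi> \<phi>' \<and>
        C1_with_deriv {r0..} (\<lambda>r. weight \<theta> r * phi_p p (\<phi>' r)) g' \<and>
        (\<forall>r\<ge>r0. g' r + weight \<theta> r * phi_p p (\<phi> r) = 0) \<and>
        \<phi> r0 = h0 \<and> \<phi>' r0 = h0')"

end

theory Submission
  imports Defs
begin

text \<open>
  Put \<open>u = \<phi>\<close> and \<open>w = \<rho> \<phi>\<^sub>p(\<phi>')\<close> with \<open>\<rho>(r) = r\<^sup>\<theta>\<^sup>-\<^sup>1\<close>. Since \<open>\<phi>\<^sub>q\<close> inverts
  \<open>\<phi>\<^sub>p\<close> for the conjugate exponent \<open>q = p / (p - 1)\<close>, the equation becomes the system
  \<open>u' = \<phi>\<^sub>q(w / \<rho>)\<close>, \<open>w' = - \<rho> \<phi>\<^sub>p(u)\<close>. Its right-hand side is not Lipschitz: \<open>\<phi>\<^sub>q\<close> is not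
  Lipschitz at 0, and \<open>w / \<rho>\<close> is singular at \<open>r = 0\<close> when \<open>\<theta> > 1\<close>.

  Near a point where \<open>(u, w) \<noteq> (0, 0)\<close> the ratio \<open>w / \<rho>\<close> still stays away from 0 for a short
  time: by continuity if \<open>w \<noteq> 0\<close>, and if \<open>w = 0\<close> because \<open>w\<close> then grows linearly with the
  sign of \<open>- u\<close>. So the Picard operator is a contraction on a small tube of functions, which gives
  local existence and uniqueness. Where \<open>(u, w) = (0, 0)\<close>, uniqueness comes instead from the
  energy \<open>\<bar>u\<bar>\<^sup>p / p + \<bar>w / \<rho>\<bar>\<^sup>q / q\<close>, which is nonincreasing along solutions because \<open>\<rho>\<close> is
  nondecreasing. The energy also bounds solutions and their derivatives on bounded intervals, so
  local solutions continue (by real induction) to every \<open>[r\<^sub>0, R]\<close>, and by uniqueness they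
  patch together to a solution on \<open>[r\<^sub>0, \<infinity>)\<close>.
\<close>

section \<open>The signed power \<open>\<phi>\<^sub>p\<close>\<close>

lemma phi_p_0 [simp]: "phi_p r 0 = 0"
  by (simp add: phi_p_def)

lemma phi_p_minus: "phi_p r (- t) = - phi_p r t"
  by (simp add: phi_p_def)

lemma phi_p_nonneg: "0 \<le> t \<Longrightarrow> phi_p r t = t powr (r - 1)"
  using powr_mult_base[of t "r - 2"] by (simp add: phi_p_def mult.commute)

lemma phi_p_nonpos: "t \<le> 0 \<Longrightarrow> phi_p r t = - ((- t) powr (r - 1))"
  using phi_p_nonneg[of "- t" r] by (simp add: phi_p_minus)

lemma abs_phi_p: "\<bar>phi_p r t\<bar> = \<bar>t\<bar> powr (r - 1)"
  by (cases "0 \<le> t") (simp_all add: phi_p_nonneg phi_p_nonpos)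

lemma phi_p_mult_self_nonneg: "0 \<le> phi_p r t * t"
  by (simp add: phi_p_def mult.assoc)

lemma phi_p_conjugate_inverse:
  assumes "(r - 1) * (s - 1) = 1"
  shows "phi_p r (phi_p s y) = y"
proof -
  have nonneg: "phi_p r (phi_p s y) = y" if "0 \<le> y" for y
    using that assms by (simp add: phi_p_nonneg powr_powr mult.commute)
  show ?thesis
    using nonneg[of y] nonneg[of "- y"] by (cases "0 \<le> y") (simp_all add: phi_p_minus)
qed

lemma isCont_phi_p:
  assumes "1 < r"
  shows "isCont (phi_p r) x"
proof (cases "x = 0")
  case True
  have "((\<lambda>t. \<bar>t\<bar> powr (r - 1)) \<longlongrightarrow> \<bar>0\<bar> powr (r - 1)) (at 0)"
    using assms by (intro tendsto_powr' tendsto_intros) auto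
  then have "((\<lambda>t. \<bar>t\<bar> powr (r - 1)) \<longlongrightarrow> 0) (at 0)" by simp
  moreover have "\<forall>\<^sub>F t in at 0. norm (phi_p r t) \<le> \<bar>t\<bar> powr (r - 1)"
    by (simp add: abs_phi_p)
  ultimately have "(phi_p r \<longlongrightarrow> 0) (at 0)"
    by (rule Lim_null_comparison[rotated])
  then show ?thesis using True by (simp add: isCont_def)
next
  case False
  then show ?thesis
    unfolding phi_p_def[abs_def] by (intro continuous_intros) auto
qed

lemma continuous_on_phi_p_comp:
  "1 < r \<Longrightarrow> continuous_on S f \<Longrightarrow> continuous_on S (\<lambda>x. phi_p r (f x))"
  by (rule continuous_on_compose2[of UNIV "phi_p r"])
    (auto intro: continuous_at_imp_continuous_on isCont_phi_p)

lemma abs_phi_p_le: "1 \<le> r \<Longrightarrow> \<bar>x\<bar> \<le> K \<Longrightarrow> \<bar>phi_p r x\<bar> \<le> K powr (r - 1)"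
  unfolding abs_phi_p by (rule powr_mono2) auto

lemma abs_phi_p_le_1_plus:
  assumes "1 \<le> r" "r \<le> 2"
  shows "\<bar>phi_p r y\<bar> \<le> 1 + \<bar>y\<bar>"
proof (cases "\<bar>y\<bar> \<le> 1")
  case True
  then have "\<bar>y\<bar> powr (r - 1) \<le> 1"
    using assms by (intro powr_le1) auto
  then show ?thesis by (simp add: abs_phi_p)
next
  case False
  then have "\<bar>y\<bar> powr (r - 1) \<le> \<bar>y\<bar> powr 1"
    using assms by (intro powr_mono) auto
  then show ?thesis using False by (simp add: abs_phi_p)
qed

lemma sgn_mult_phi_p_ge:
  assumes "1 \<le> r" "a \<noteq> 0" "\<bar>y - a\<bar> \<le> \<bar>a\<bar> / 2"
  shows "(\<bar>a\<bar> / 2) powr (r - 1) \<le> sgn a * phi_p r y"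
proof (cases "0 < a")
  case True
  then have "a / 2 \<le> y" using assms(3) by (auto simp: abs_if split: if_splits)
  then have "(a / 2) powr (r - 1) \<le> y powr (r - 1)" using True assms(1) by (intro powr_mono2) auto
  then show ?thesis using True \<open>a / 2 \<le> y\<close> by (simp add: phi_p_nonneg)
next
  case False
  then have "a < 0" "y \<le> a / 2" using assms(2,3) by (auto simp: abs_if split: if_splits)
  then have "(- a / 2) powr (r - 1) \<le> (- y) powr (r - 1)" using assms(1) by (intro powr_mono2) auto
  then show ?thesis using \<open>a < 0\<close> \<open>y \<le> a / 2\<close> by (simp add: phi_p_nonpos)
qed

lemma has_real_derivative_abs_powr:
  assumes "1 < r"
  shows "((\<lambda>x. \<bar>x\<bar> powr r) has_real_derivative r * phi_p r x) (at x)"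
proof -
  consider "0 < x" | "x < 0" | "x = 0" by linarith
  then show ?thesis
  proof cases
    case 1
    have "((\<lambda>z. z powr r) has_real_derivative r * x powr (r - 1)) (at x)"
      using 1 by (rule has_real_derivative_powr)
    then have "((\<lambda>z. \<bar>z\<bar> powr r) has_real_derivative r * x powr (r - 1)) (at x)"
      by (rule has_field_derivative_transform_within_open[where S = "{0<..}"]) (use 1 in auto)
    then show ?thesis using 1 by (simp add: phi_p_nonneg)
  next
    case 2
    have "((\<lambda>z. - z) has_real_derivative - 1) (at x)"
      by (auto intro!: derivative_eq_intros)
    from DERIV_fun_powr[OF this, of r]
    have "((\<lambda>z. (- z) powr r) has_real_derivative r * (- x) powr (r - 1) * (- 1)) (at x)"
      using 2 by simp
    then have "((\<lambda>z. \<bar>z\<bar> powr r) has_real_derivative r * (- x) powr (r - 1) * (- 1)) (at x)"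
      by (rule has_field_derivative_transform_within_open[where S = "{..<0}"]) (use 2 in auto)
    then show ?thesis using 2 by (simp add: phi_p_nonpos)
  next
    case 3
    have "((\<lambda>h. \<bar>h\<bar> powr (r - 1)) \<longlongrightarrow> \<bar>0\<bar> powr (r - 1)) (at 0)"
      using assms by (intro tendsto_powr' tendsto_intros) auto
    then have "((\<lambda>h. \<bar>h\<bar> powr (r - 1)) \<longlongrightarrow> 0) (at 0)" by simp
    moreover have "\<forall>\<^sub>F h in at 0. norm ((\<bar>0 + h\<bar> powr r - \<bar>0\<bar> powr r) / h) \<le> \<bar>h\<bar> powr (r - 1)"
      by (intro always_eventually allI) (simp add: powr_diff abs_divide)
    ultimately have "((\<lambda>h. (\<bar>0 + h\<bar> powr r - \<bar>0\<bar> powr r) / h) \<longlongrightarrow> 0) (at 0)"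
      by (rule Lim_null_comparison[rotated])
    then show ?thesis using 3 by (simp add: DERIV_def)
  qed
qed

lemma powr_diff_mvt:
  fixes x y s :: real
  assumes "0 \<le> y" "y < x" "0 < s"
  obtains z where "y < z" "z < x" "x powr s - y powr s = (x - y) * (s * z powr (s - 1))"
proof -
  have "continuous_on {y..x} (\<lambda>t. t powr s)"
    using assms by (intro continuous_on_powr') (auto intro: continuous_intros)
  moreover have "(\<lambda>t. t powr s) differentiable (at t)" if "y < t" for t
    using that assms has_real_derivative_powr[of t s] by (auto simp: real_differentiable_def)
  ultimately obtain l z where z: "y < z" "z < x" "DERIV (\<lambda>t. t powr s) z :> l"
    "x powr s - y powr s = (x - y) * l"
    using MVT[OF assms(2)] by blast
  moreover have "l = s * z powr (s - 1)"
    using DERIV_unique[OF z(3) has_real_derivative_powr[of z s]] z assms by auto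
  ultimately show ?thesis using that by blast
qed

lemma abs_powr_diff_le:
  fixes x y s L :: real
  assumes "0 < s" "0 \<le> x" "0 \<le> y"
    and L: "\<And>z. min x y < z \<Longrightarrow> z < max x y \<Longrightarrow> z powr (s - 1) \<le> L"
  shows "\<bar>x powr s - y powr s\<bar> \<le> s * L * \<bar>x - y\<bar>"
proof -
  have ordered: "\<bar>x powr s - y powr s\<bar> \<le> s * L * (x - y)"
    if xy: "0 \<le> y" "y < x" and L: "\<And>z. y < z \<Longrightarrow> z < x \<Longrightarrow> z powr (s - 1) \<le> L" for x y
  proof -
    obtain z where z: "y < z" "z < x" "x powr s - y powr s = (x - y) * (s * z powr (s - 1))"
      using powr_diff_mvt[of y x s] xy assms(1) by auto
    have "0 \<le> (x - y) * (s * z powr (s - 1))" using z assms(1) by simp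
    then have "\<bar>x powr s - y powr s\<bar> = (x - y) * (s * z powr (s - 1))" using z(3) by simp
    also have "\<dots> \<le> (x - y) * (s * L)" using z L[of z] assms(1) by (intro mult_left_mono) auto
    finally show ?thesis by (simp add: mult_ac)
  qed
  show ?thesis
    using ordered[of x y] ordered[of y x] assms
    by (cases x y rule: linorder_cases) (auto simp: abs_minus_commute)
qed

lemma phi_p_lipschitz_bounded:
  assumes "2 \<le> r" "\<bar>x\<bar> \<le> K" "\<bar>y\<bar> \<le> K"
  shows "\<bar>phi_p r x - phi_p r y\<bar> \<le> (r - 1) * K powr (r - 2) * \<bar>x - y\<bar>"
proof -
  define L where "L = (r - 1) * K powr (r - 2)"
  have nonneg: "\<bar>phi_p r x - phi_p r y\<bar> \<le> L * \<bar>x - y\<bar>"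
    if "0 \<le> x" "0 \<le> y" "x \<le> K" "y \<le> K" for x y
    using abs_powr_diff_le[of "r - 1" x y "K powr (r - 2)"] that assms(1)
    by (simp add: phi_p_nonneg L_def powr_mono2)
  have opposite: "\<bar>phi_p r x - phi_p r y\<bar> \<le> L * \<bar>x - y\<bar>"
    if "0 \<le> x" "y \<le> 0" "x \<le> K" "- y \<le> K" for x y
  proof -
    have "\<bar>phi_p r x - phi_p r y\<bar> = \<bar>phi_p r x - phi_p r 0\<bar> + \<bar>phi_p r (- y) - phi_p r 0\<bar>"
      using that by (simp add: phi_p_nonneg phi_p_nonpos)
    also have "\<dots> \<le> L * \<bar>x - 0\<bar> + L * \<bar>- y - 0\<bar>"
      using nonneg[of x 0] nonneg[of "- y" 0] that by (intro add_mono) auto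
    also have "\<dots> = L * \<bar>x - y\<bar>" using that by (simp add: algebra_simps)
    finally show ?thesis .
  qed
  consider "0 \<le> x" "0 \<le> y" | "x \<le> 0" "y \<le> 0" | "0 \<le> x" "y \<le> 0" | "x \<le> 0" "0 \<le> y"
    by linarith
  then show ?thesis
  proof cases
    case 2
    then show ?thesis
      using nonneg[of "- x" "- y"] assms by (simp add: phi_p_minus L_def abs_minus_commute)
  next
    case 4
    then show ?thesis
      using opposite[of y x] assms by (simp add: L_def abs_minus_commute)
  qed (use nonneg opposite assms in \<open>auto simp: L_def\<close>)
qed

lemma phi_p_lipschitz_away_from_0:
  assumes "1 < r" "r \<le> 2" "0 < m" "(m \<le> x \<and> m \<le> y) \<or> (x \<le> - m \<and> y \<le> - m)"
  shows "\<bar>phi_p r x - phi_p r y\<bar> \<le> (r - 1) * m powr (r - 2) * \<bar>x - y\<bar>"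
proof -
  have positive: "\<bar>phi_p r x - phi_p r y\<bar> \<le> (r - 1) * m powr (r - 2) * \<bar>x - y\<bar>"
    if "m \<le> x" "m \<le> y" for x y
    using abs_powr_diff_le[of "r - 1" x y "m powr (r - 2)"] that assms(1-3)
    by (simp add: phi_p_nonneg powr_mono2')
  show ?thesis
    using assms(4) positive[of x y] positive[of "- x" "- y"]
    by (auto simp: phi_p_minus abs_minus_commute)
qed

lemma powr_mult_self_le:
  fixes M x e :: real
  assumes "0 < M" "0 < x" "x \<le> 1" "- 1 \<le> e"
  shows "(M * x) powr e * x \<le> M powr e"
proof -
  have "(M * x) powr e * x = M powr e * x powr (e + 1)"
    using assms by (simp add: powr_mult powr_add)
  also have "\<dots> \<le> M powr e * 1"
    using assms by (intro mult_left_mono powr_le1) auto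
  finally show ?thesis by simp
qed

section \<open>The weight\<close>

lemma weight_nonneg: "0 \<le> weight \<theta> r"
  by (simp add: weight_def)

lemma weight_pos: "0 < r \<Longrightarrow> 0 < weight \<theta> r"
  by (simp add: weight_def)

lemma weight_eq_0_imp: "0 \<le> r \<Longrightarrow> weight \<theta> r = 0 \<Longrightarrow> r = 0"
  by (auto simp: weight_def split: if_splits)

lemma weight_mono: "1 \<le> \<theta> \<Longrightarrow> 0 \<le> r \<Longrightarrow> r \<le> s \<Longrightarrow> weight \<theta> r \<le> weight \<theta> s"
  by (auto simp: weight_def intro: powr_mono2)

lemma continuous_on_weight:
  assumes "1 \<le> \<theta>"
  shows "continuous_on {0..} (weight \<theta>)"
proof (cases "\<theta> = 1")
  case False
  then have "continuous_on {0..} (\<lambda>r::real. r powr (\<theta> - 1))"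
    using assms by (intro continuous_on_powr') (auto intro: continuous_intros)
  then show ?thesis using False by (simp add: weight_def)
qed (simp add: weight_def)

lemma has_real_derivative_weight:
  "0 < r \<Longrightarrow> (weight \<theta> has_real_derivative (\<theta> - 1) * r powr (\<theta> - 2)) (at r)"
proof (cases "\<theta> = 1")
  case False
  assume "0 < r"
  then have "((\<lambda>z. z powr (\<theta> - 1)) has_real_derivative (\<theta> - 1) * r powr (\<theta> - 1 - 1)) (at r)"
    by (rule has_real_derivative_powr)
  moreover have "weight \<theta> = (\<lambda>z. z powr (\<theta> - 1))" using False by (auto simp: weight_def)
  ultimately show ?thesis by simp
next
  case True
  then have "weight \<theta> = (\<lambda>_. 1)" by (auto simp: weight_def)
  then show ?thesis using True by simp
qed

lemma powr_eq_mult_weight: "0 \<le> r \<Longrightarrow> 1 \<le> \<theta> \<Longrightarrow> r powr \<theta> = r * weight \<theta> r"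
  using powr_mult_base[of r "\<theta> - 1"] by (auto simp: weight_def)

lemma has_integral_weight:
  assumes "1 \<le> \<theta>" "0 \<le> c" "c \<le> s"
  shows "(weight \<theta> has_integral (s powr \<theta> / \<theta> - c powr \<theta> / \<theta>)) {c..s}"
proof (rule fundamental_theorem_of_calculus_interior)
  show "continuous_on {c..s} (\<lambda>r. r powr \<theta> / \<theta>)"
    using assms by (intro continuous_intros continuous_on_powr') auto
  show "((\<lambda>r. r powr \<theta> / \<theta>) has_vector_derivative weight \<theta> x) (at x)" if "x \<in> {c<..<s}" for x
  proof -
    have "0 < x" using that assms by auto
    then have "((\<lambda>r. r powr \<theta> / \<theta>) has_real_derivative \<theta> * x powr (\<theta> - 1) / \<theta>) (at x)"
      by (intro DERIV_cdivide has_real_derivative_powr)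
    moreover have "\<theta> * x powr (\<theta> - 1) / \<theta> = weight \<theta> x"
      using assms \<open>0 < x\<close> by (simp add: weight_def)
    ultimately show ?thesis by (simp add: has_real_derivative_iff_has_vector_derivative)
  qed
qed (use assms in auto)

lemma weight_integral_lower_bound:
  assumes "1 \<le> \<theta>" "0 \<le> c" "c \<le> s"
  shows "(s - c) * weight \<theta> s / \<theta> \<le> s powr \<theta> / \<theta> - c powr \<theta> / \<theta>"
proof -
  have "c * weight \<theta> c \<le> c * weight \<theta> s" using assms by (intro mult_left_mono weight_mono) auto
  then have "(s - c) * weight \<theta> s \<le> s * weight \<theta> s - c * weight \<theta> c" by (simp add: algebra_simps)
  then show ?thesis
    using assms by (simp add: powr_eq_mult_weight diff_divide_distrib[symmetric] divide_right_mono)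
qed

lemma abs_le_of_derivative_le_weight:
  assumes "1 \<le> \<theta>" "0 \<le> s" "0 \<le> M" "N 0 = 0"
    and "\<And>t. t \<in> {0..s} \<Longrightarrow> (N has_real_derivative N' t) (at t within {0..s})"
    and "\<And>t. t \<in> {0..s} \<Longrightarrow> \<bar>N' t\<bar> \<le> weight \<theta> t * M"
  shows "\<bar>N s\<bar> \<le> weight \<theta> s * M * s"
proof -
  have "norm (N s - N 0) \<le> (weight \<theta> s * M) * norm (s - 0)"
  proof (rule field_differentiable_bound[of "{0..s}" N N'])
    show "norm (N' t) \<le> weight \<theta> s * M" if "t \<in> {0..s}" for t
      using assms(6)[OF that] that weight_mono[OF assms(1), of t s] assms(3)
      by (auto intro: order_trans mult_right_mono)
  qed (use assms in auto)
  then show ?thesis using assms(2,4) by simp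
qed

lemma continuous_on_divide_weight:
  assumes "1 \<le> \<theta>" "0 \<le> c" "0 \<le> M"
    and N: "\<And>t. t \<in> {c..d} \<Longrightarrow> (N has_real_derivative N' t) (at t within {c..d})"
    and N'_bound: "\<And>t. t \<in> {c..d} \<Longrightarrow> \<bar>N' t\<bar> \<le> weight \<theta> t * M"
    and N_c: "weight \<theta> c = 0 \<Longrightarrow> N c = 0"
  shows "continuous_on {c..d} (\<lambda>s. N s / weight \<theta> s)"
  unfolding continuous_on_eq_continuous_within
proof
  fix t assume t: "t \<in> {c..d}"
  show "continuous (at t within {c..d}) (\<lambda>s. N s / weight \<theta> s)"
  proof (cases "weight \<theta> t = 0")
    case False
    have "continuous (at t within {c..d}) (weight \<theta>)"
      using continuous_on_subset[OF continuous_on_weight[OF assms(1)], of "{c..d}"] t assms(2)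
      by (auto simp: continuous_on_eq_continuous_within)
    then show ?thesis
      using DERIV_continuous[OF N[OF t]] False unfolding continuous_within by (intro tendsto_divide)
  next
    case True
    then have "t = 0" using weight_eq_0_imp[of t] t assms(2) by auto
    then have "c = 0" using t assms(2) by auto
    have N_0: "N 0 = 0" using N_c True \<open>t = 0\<close> \<open>c = 0\<close> by simp
    have "\<bar>N s / weight \<theta> s\<bar> \<le> M * s" if s: "s \<in> {0..d}" for s
    proof (cases "s = 0")
      case False
      have "\<bar>N s\<bar> \<le> weight \<theta> s * M * s"
      proof (rule abs_le_of_derivative_le_weight[of \<theta> s M N N'])
        show "(N has_real_derivative N' z) (at z within {0..s})" if "z \<in> {0..s}" for z
          using N[of z] that s \<open>c = 0\<close> by (auto intro: DERIV_subset)
      qed (use s \<open>c = 0\<close> N'_bound N_0 assms in auto)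
      then show ?thesis
        using False s weight_pos[of s \<theta>] by (simp add: abs_divide field_simps)
    qed (simp add: N_0)
    then have "\<forall>\<^sub>F s in at 0 within {0..d}. norm (N s / weight \<theta> s) \<le> M * s"
      by (auto simp: eventually_at_filter)
    moreover have "((\<lambda>s. M * s) \<longlongrightarrow> 0) (at 0 within {0..d})"
      by (intro tendsto_eq_intros) auto
    ultimately have "((\<lambda>s. N s / weight \<theta> s) \<longlongrightarrow> 0) (at 0 within {0..d})"
      by (rule Lim_null_comparison)
    then show ?thesis using \<open>t = 0\<close> \<open>c = 0\<close> N_0 by (simp add: continuous_within)
  qed
qed

section \<open>Calculus on real intervals\<close>

lemma has_derivative_imp_integral_eq:
  fixes x g :: "real \<Rightarrow> real"
  assumes "\<And>t. t \<in> {c..d} \<Longrightarrow> (x has_real_derivative g t) (at t within {c..d})" "t \<in> {c..d}"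
  shows "x t = x c + integral {c..t} g"
proof -
  have "(g has_integral (x t - x c)) {c..t}"
  proof (rule fundamental_theorem_of_calculus)
    fix s assume s: "s \<in> {c..t}"
    then have "(x has_real_derivative g s) (at s within {c..d})" using assms by auto
    then have "(x has_real_derivative g s) (at s within {c..t})"
      by (rule DERIV_subset) (use assms(2) in auto)
    then show "(x has_vector_derivative g s) (at s within {c..t})"
      by (simp add: has_real_derivative_iff_has_vector_derivative)
  qed (use assms(2) in auto)
  then show ?thesis by (simp add: integral_unique)
qed

lemma integral_eq_imp_has_derivative:
  fixes x g :: "real \<Rightarrow> real"
  assumes "continuous_on {c..d} g" "\<And>t. t \<in> {c..d} \<Longrightarrow> x t = x c + integral {c..t} g"
    and "t \<in> {c..d}"
  shows "(x has_real_derivative g t) (at t within {c..d})"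
proof -
  have "((\<lambda>s. integral {c..s} g) has_real_derivative g t) (at t within {c..d})"
    using integral_has_vector_derivative[OF assms(1,3)]
    by (simp add: has_real_derivative_iff_has_vector_derivative)
  then have "((\<lambda>s. x c + integral {c..s} g) has_real_derivative g t) (at t within {c..d})"
    using DERIV_add[OF DERIV_const] by fastforce
  then show ?thesis
    by (rule has_field_derivative_transform_within[OF _ zero_less_one assms(3)])
      (simp add: assms(2)[symmetric])
qed

lemma abs_integral_le:
  fixes h :: "real \<Rightarrow> real"
  assumes "c \<le> s" "continuous_on {c..s} h" "\<And>\<tau>. \<tau> \<in> {c..s} \<Longrightarrow> \<bar>h \<tau>\<bar> \<le> B"
  shows "\<bar>integral {c..s} h\<bar> \<le> B * (s - c)"
proof -
  have "0 \<le> B" using assms(1) assms(3)[of c] by auto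
  moreover have "(h has_integral integral {c..s} h) {c..s}"
    using assms(2) by (intro integrable_integral integrable_continuous_interval)
  ultimately show ?thesis
    using has_integral_bound_real[of B "{}" h "integral {c..s} h" c s] assms(1,3)
    by (auto simp: content_real)
qed

lemma continuous_on_agree_at_right_end:
  fixes f g :: "real \<Rightarrow> real"
  assumes "a < b" "continuous_on {a..b} f" "continuous_on {a..b} g"
    and "\<And>t. t \<in> {a..<b} \<Longrightarrow> f t = g t"
  shows "f b = g b"
proof -
  have "closed {t \<in> {a..b}. f t - g t = 0}"
    by (intro continuous_closed_preimage_constant continuous_on_diff assms) auto
  moreover have "{a..<b} \<subseteq> {t \<in> {a..b}. f t - g t = 0}" using assms(4) by auto
  ultimately have "closure {a..<b} \<subseteq> {t \<in> {a..b}. f t - g t = 0}"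
    by (intro closure_minimal)
  moreover have "b \<in> closure {a..<b}" using assms(1) by simp
  ultimately have "b \<in> {t \<in> {a..b}. f t - g t = 0}" by (rule subsetD)
  then show ?thesis by simp
qed

lemma integral_equation_at_right_end:
  fixes x g :: "real \<Rightarrow> real"
  assumes "a < T" "continuous_on {a..T} x" "continuous_on {a..T} g"
    and eq: "\<And>t. t \<in> {a..<T} \<Longrightarrow> x t = x a + integral {a..t} g" and "t \<in> {a..T}"
  shows "x t = x a + integral {a..t} g"
proof (cases "t = T")
  case True
  have "x T = x a + integral {a..T} g"
  proof (rule continuous_on_agree_at_right_end[OF assms(1,2)])
    show "continuous_on {a..T} (\<lambda>t. x a + integral {a..t} g)"
      by (intro continuous_on_add continuous_on_const indefinite_integral_continuous_1
          integrable_continuous_interval assms(3))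
  qed (rule eq)
  then show ?thesis using True by simp
qed (use eq[of t] assms(5) in auto)

lemma integral_equation_glue:
  fixes x1 x2 g g1 g2 :: "real \<Rightarrow> real"
  assumes "c \<le> m" "continuous_on {c..d} g"
    and g1: "\<And>s. s \<in> {c..m} \<Longrightarrow> g s = g1 s" and g2: "\<And>s. s \<in> {m..d} \<Longrightarrow> g s = g2 s"
    and x1: "\<And>t. t \<in> {c..m} \<Longrightarrow> x1 t = x1 c + integral {c..t} g1"
    and x2: "\<And>t. t \<in> {m..d} \<Longrightarrow> x2 t = x2 m + integral {m..t} g2"
    and "x1 m = x2 m" "t \<in> {c..d}"
  shows "(if t \<le> m then x1 t else x2 t) = x1 c + integral {c..t} g"
proof (cases "t \<le> m")
  case True
  have "integral {c..t} g1 = integral {c..t} g" using True g1 by (intro integral_cong) auto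
  then show ?thesis using x1[of t] True assms(8) by auto
next
  case False
  have "g integrable_on {c..t}"
    by (rule integrable_continuous_interval, rule continuous_on_subset[OF assms(2)]) (use assms(8) in auto)
  then have "integral {c..m} g + integral {m..t} g = integral {c..t} g"
    using False assms(1) by (intro Henstock_Kurzweil_Integration.integral_combine) auto
  moreover have "integral {c..m} g1 = integral {c..m} g" "integral {m..t} g2 = integral {m..t} g"
    using g1 g2 assms(8) by (auto intro: integral_cong)
  moreover have "x2 t = x2 m + integral {m..t} g2" using x2[of t] False assms(8) by auto
  moreover have "x2 m = x1 c + integral {c..m} g1" using x1[of m] assms(1,7) by auto
  ultimately show ?thesis using False by simp
qed

lemma continuous_on_Icc_glue:
  fixes f g :: "real \<Rightarrow> real"
  assumes "c \<le> m" "m \<le> d" "continuous_on {c..m} f" "continuous_on {m..d} g" "f m = g m"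
  shows "continuous_on {c..d} (\<lambda>t. if t \<le> m then f t else g t)"
proof -
  have "continuous_on {c..m} (\<lambda>t. if t \<le> m then f t else g t)"
    using assms(3) by (rule continuous_on_eq) auto
  moreover have "continuous_on {m..d} (\<lambda>t. if t \<le> m then f t else g t)"
    using assms(4) by (rule continuous_on_eq) (use assms(5) in auto)
  ultimately have "continuous_on ({c..m} \<union> {m..d}) (\<lambda>t. if t \<le> m then f t else g t)"
    by (intro continuous_on_closed_Un) auto
  moreover have "{c..m} \<union> {m..d} = {c..d}" using assms(1,2) by auto
  ultimately show ?thesis by simp
qed

lemma has_derivative_bound_imp_lipschitz_on:
  fixes f :: "real \<Rightarrow> real"
  assumes "\<And>t. t \<in> {c..d} \<Longrightarrow> (f has_real_derivative f' t) (at t within {c..d})"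
    and "\<And>t. t \<in> {c..d} \<Longrightarrow> \<bar>f' t\<bar> \<le> L" "0 \<le> L"
  shows "L-lipschitz_on {c..d} f"
proof (rule lipschitz_onI)
  show "dist (f s) (f t) \<le> L * dist s t" if "s \<in> {c..d}" "t \<in> {c..d}" for s t
    using field_differentiable_bound[of "{c..d}" f f' L s t] assms that by (simp add: dist_real_def)
qed (fact assms(3))

lemma at_within_Icc_eq_atLeast:
  fixes x R a :: real
  assumes "x < R"
  shows "at x within {a..R} = at x within {a..}"
  by (rule at_within_nhd[of x "{..<R}"]) (use assms in auto)

lemma C1_with_deriv_cong:
  assumes "C1_with_deriv S f f'" "\<And>x. x \<in> S \<Longrightarrow> g x = f x"
  shows "C1_with_deriv S g f'"
  using assms unfolding C1_with_deriv_def
  by (auto intro: has_field_derivative_transform_within[OF _ zero_less_one])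

lemma real_induct_atLeast:
  fixes P :: "real \<Rightarrow> bool"
  assumes start: "P a"
    and limit: "\<And>T. a < T \<Longrightarrow> (\<And>R. a \<le> R \<Longrightarrow> R < T \<Longrightarrow> P R) \<Longrightarrow> P T"
    and step: "\<And>T. a \<le> T \<Longrightarrow> (\<And>R. a \<le> R \<Longrightarrow> R \<le> T \<Longrightarrow> P R) \<Longrightarrow> \<exists>e>0. \<forall>R\<in>{T..T + e}. P R"
    and "a \<le> x"
  shows "P x"
proof (rule ccontr)
  assume "\<not> P x"
  define A where "A = {T. a \<le> T \<and> (\<forall>R. a \<le> R \<longrightarrow> R \<le> T \<longrightarrow> P R)}"
  have "a \<in> A" using start by (auto simp: A_def)
  have "T \<le> x" if "T \<in> A" for T
  proof (rule ccontr)
    assume "\<not> T \<le> x"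
    then show False using that \<open>a \<le> x\<close> \<open>\<not> P x\<close> unfolding A_def by auto
  qed
  then have bdd: "bdd_above A" by (rule bdd_aboveI)
  define S where "S = Sup A"
  have "a \<le> S" using cSup_upper[OF \<open>a \<in> A\<close> bdd] by (simp add: S_def)
  have below: "P R" if "a \<le> R" "R < S" for R
  proof -
    obtain T where "T \<in> A" "R < T"
      using less_cSupE[of R A] \<open>a \<in> A\<close> \<open>R < S\<close> unfolding S_def by blast
    then show ?thesis using that unfolding A_def by auto
  qed
  have "P S"
  proof (cases "S = a")
    case False
    with \<open>a \<le> S\<close> have "a < S" by simp
    then show ?thesis by (rule limit) (rule below)
  qed (simp add: start)
  then have upto_S: "P R" if "a \<le> R" "R \<le> S" for R
    using below that by (cases "R = S") auto
  obtain e where "0 < e" and e: "\<forall>R\<in>{S..S + e}. P R"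
    using step[OF \<open>a \<le> S\<close> upto_S] by blast
  have "P R" if "a \<le> R" "R \<le> S + e" for R
    using upto_S[of R] e that by (cases "R \<le> S") auto
  then have "S + e \<in> A" using \<open>a \<le> S\<close> \<open>0 < e\<close> unfolding A_def by auto
  then have "S + e \<le> S" unfolding S_def by (rule cSup_upper[OF _ bdd])
  then show False using \<open>0 < e\<close> by simp
qed

section \<open>Contractions on tubes of continuous functions\<close>

lemma small_step_size:
  fixes \<delta> D B C :: real
  assumes "0 < \<delta>" "0 < D" "0 < B" "0 \<le> C"
  obtains e where "0 < e" "e \<le> \<delta>" "e * B \<le> D" "e * C \<le> 1 / 2"
proof (rule that[of "min \<delta> (min (D / B) (1 / (2 * C + 2)))"])
  define e where "e = min \<delta> (min (D / B) (1 / (2 * C + 2)))"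
  have "e \<le> D / B" "e \<le> 1 / (2 * C + 2)" by (simp_all add: e_def)
  then have "e * B \<le> D" "e * C \<le> C / (2 * C + 2)"
    using assms(3,4) mult_right_mono[of e "1 / (2 * C + 2)" C] by (simp_all add: pos_le_divide_eq)
  moreover have "C / (2 * C + 2) \<le> 1 / 2" using assms(4) by (simp add: field_simps)
  ultimately show "e * B \<le> D" "e * C \<le> 1 / 2" unfolding e_def by linarith+
qed (use assms in auto)

definition tube :: "real \<Rightarrow> real \<Rightarrow> real \<Rightarrow> real \<Rightarrow> (real \<Rightarrow> real) set" where
  "tube c E a D = {f. continuous_on {c..E} f \<and> (\<forall>t\<in>{c..E}. \<bar>f t - a\<bar> \<le> D)}"

lemma tube_mono: "f \<in> tube c E a D \<Longrightarrow> s \<le> E \<Longrightarrow> f \<in> tube c s a D"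
  by (auto simp: tube_def elim: continuous_on_subset)

lemma abs_le_of_tube: "f \<in> tube c E a D \<Longrightarrow> t \<in> {c..E} \<Longrightarrow> \<bar>f t\<bar> \<le> \<bar>a\<bar> + D"
  by (force simp: tube_def)

lemma in_tube_near_start:
  assumes "continuous_on {c..d} u" "0 < D" "c < d"
  obtains e where "0 < e" "e \<le> d - c" "u \<in> tube c (c + e) (u c) D"
proof -
  have "c \<in> {c..d}" using assms(3) by simp
  then obtain \<delta> where "0 < \<delta>" and \<delta>: "\<And>t. t \<in> {c..d} \<Longrightarrow> dist t c < \<delta> \<Longrightarrow> dist (u t) (u c) < D"
    using assms(1,2) unfolding continuous_on_iff by blast
  define e where "e = min (\<delta> / 2) (d - c)"
  have "0 < e" "e \<le> d - c" "e < \<delta>" using \<open>0 < \<delta>\<close> assms(3) by (auto simp: e_def)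
  moreover have "continuous_on {c..c + e} u"
    by (rule continuous_on_subset[OF assms(1)]) (use \<open>e \<le> d - c\<close> in auto)
  moreover have "\<bar>u t - u c\<bar> \<le> D" if "t \<in> {c..c + e}" for t
    using \<delta>[of t] that \<open>e \<le> d - c\<close> \<open>e < \<delta>\<close> by (simp add: dist_real_def)
  ultimately show thesis by (intro that[of e]) (auto simp: tube_def)
qed

lemma clamp_real_in: "c \<le> E \<Longrightarrow> clamp c E (x::real) \<in> {c..E}"
  using clamp_in_interval[of c E x] by (simp add: box_real)

lemma clamp_real_cancel: "x \<in> {c..E} \<Longrightarrow> clamp c E (x::real) = x"
  using clamp_cancel_cbox[of x c E] by (simp add: box_real)

lemma bcontfun_clamp:
  fixes F :: "real \<Rightarrow> real"
  assumes "continuous_on {c..E} F"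
  shows "(\<lambda>x. F (clamp c E x)) \<in> bcontfun"
proof -
  obtain g :: "real \<Rightarrow>\<^sub>C real" where "\<And>x. g x = F (clamp c E x)"
    using continuous_on_cbox_bcontfunE[of c E F] assms by (auto simp: box_real)
  then have "(\<lambda>x. F (clamp c E x)) = apply_bcontfun g" by auto
  then show ?thesis by (simp add: apply_bcontfun)
qed

lemma closed_bcontfun_tube: "closed {f::real \<Rightarrow>\<^sub>C real. \<forall>x. \<bar>f x - a\<bar> \<le> D}"
proof -
  have "continuous_on UNIV (\<lambda>f::real \<Rightarrow>\<^sub>C real. f x)" for x
    by (rule lipschitz_on_continuous_on[of 1]) (auto intro: lipschitz_onI simp: dist_bounded)
  then have "closed {f::real \<Rightarrow>\<^sub>C real. \<bar>f x - a\<bar> \<le> D}" for x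
    by (intro closed_Collect_le continuous_intros)
  moreover have "{f::real \<Rightarrow>\<^sub>C real. \<forall>x. \<bar>f x - a\<bar> \<le> D} = (\<Inter>x. {f::real \<Rightarrow>\<^sub>C real. \<bar>f x - a\<bar> \<le> D})"
    by auto
  ultimately show ?thesis by auto
qed

text \<open>Banach's fixed point theorem, applied in the space of bounded continuous functions on
  the real line to the operator \<open>f \<mapsto> T f \<circ> clamp c E\<close>.\<close>

lemma tube_contraction_fixed_point:
  fixes T :: "(real \<Rightarrow> real) \<Rightarrow> real \<Rightarrow> real"
  assumes "c \<le> E" "0 \<le> D" "0 \<le> k" "k < 1"
    and maps_to: "\<And>f. f \<in> tube c E a D \<Longrightarrow> T f \<in> tube c E a D"
    and contraction: "\<And>f g d. f \<in> tube c E a D \<Longrightarrow> g \<in> tube c E a D \<Longrightarrow>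
      (\<forall>t\<in>{c..E}. \<bar>f t - g t\<bar> \<le> d) \<Longrightarrow> \<forall>t\<in>{c..E}. \<bar>T f t - T g t\<bar> \<le> k * d"
  shows "\<exists>f\<in>tube c E a D. \<forall>t\<in>{c..E}. T f t = f t"
proof -
  define S where "S = {f::real \<Rightarrow>\<^sub>C real. \<forall>x. \<bar>f x - a\<bar> \<le> D}"
  define \<Phi> where "\<Phi> f = Bcontfun (\<lambda>t. T (apply_bcontfun f) (clamp c E t))" for f
  have in_tube: "apply_bcontfun f \<in> tube c E a D" if "f \<in> S" for f
    using that by (auto simp: S_def tube_def)
  have \<Phi>_apply: "\<Phi> f t = T (apply_bcontfun f) (clamp c E t)" if "f \<in> S" for f t
    using maps_to[OF in_tube[OF that]]
    by (simp add: \<Phi>_def tube_def bcontfun_clamp Bcontfun_inverse)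
  have "\<Phi> ` S \<subseteq> S"
    using maps_to[OF in_tube] clamp_real_in[OF assms(1)] by (auto simp: S_def tube_def \<Phi>_apply)
  moreover have "dist (\<Phi> f) (\<Phi> g) \<le> k * dist f g" if "f \<in> S" "g \<in> S" for f g
  proof (rule dist_bound)
    fix t
    have "\<forall>s\<in>{c..E}. \<bar>f s - g s\<bar> \<le> dist f g" using dist_bounded[of f _ g] by (simp add: dist_real_def)
    then show "dist (\<Phi> f t) (\<Phi> g t) \<le> k * dist f g"
      using contraction[OF in_tube in_tube] that clamp_real_in[OF assms(1)]
      by (simp add: \<Phi>_apply dist_real_def)
  qed
  moreover have "complete S"
    unfolding S_def complete_eq_closed by (rule closed_bcontfun_tube)
  moreover have "const_bcontfun a \<in> S" using assms(2) by (simp add: S_def)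
  ultimately obtain f where "f \<in> S" "\<Phi> f = f"
    using Banach_fix[of S k \<Phi>] assms(3,4) by blast
  then have "\<forall>t\<in>{c..E}. T (apply_bcontfun f) t = f t"
    by (metis \<Phi>_apply clamp_real_cancel)
  then show ?thesis using in_tube[OF \<open>f \<in> S\<close>] by blast
qed

lemma tube_contraction_fixed_point_unique:
  fixes T :: "(real \<Rightarrow> real) \<Rightarrow> real \<Rightarrow> real"
  assumes "k < 1"
    and contraction: "\<And>f g d. f \<in> tube c E a D \<Longrightarrow> g \<in> tube c E a D \<Longrightarrow>
      (\<forall>t\<in>{c..E}. \<bar>f t - g t\<bar> \<le> d) \<Longrightarrow> \<forall>t\<in>{c..E}. \<bar>T f t - T g t\<bar> \<le> k * d"
    and f: "f \<in> tube c E a D" "\<forall>t\<in>{c..E}. T f t = f t"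
    and g: "g \<in> tube c E a D" "\<forall>t\<in>{c..E}. T g t = g t"
    and t: "t \<in> {c..E}"
  shows "f t = g t"
proof -
  have "continuous_on {c..E} (\<lambda>t. \<bar>f t - g t\<bar>)"
    using f(1) g(1) by (auto simp: tube_def intro!: continuous_intros)
  from continuous_attains_sup[OF compact_Icc _ this]
  obtain t0 where t0: "t0 \<in> {c..E}" "\<forall>t\<in>{c..E}. \<bar>f t - g t\<bar> \<le> \<bar>f t0 - g t0\<bar>"
    using t by auto
  then have "\<bar>f t0 - g t0\<bar> \<le> k * \<bar>f t0 - g t0\<bar>"
    using contraction[OF f(1) g(1) t0(2)] f(2) g(2) by auto
  then have "\<bar>f t0 - g t0\<bar> = 0"
    using assms(1) by (smt (verit) mult_less_cancel_right2)
  then show ?thesis using t0(2) t by fastforce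
qed

section \<open>The first-order system and its energy\<close>

locale p_laplacian_ode =
  fixes p \<theta> :: real
  assumes p_ge_2: "2 \<le> p" and theta_ge_1: "1 \<le> \<theta>"
begin

abbreviation \<rho> :: "real \<Rightarrow> real" where "\<rho> \<equiv> weight \<theta>"

definition q :: real where "q = p / (p - 1)"

lemma q_gt_1: "1 < q" and q_le_2: "q \<le> 2" and p_q_conjugate: "(p - 1) * (q - 1) = 1"
  using p_ge_2 by (auto simp: q_def field_simps)

lemma phi_p_phi_q [simp]: "phi_p p (phi_p q y) = y"
  by (rule phi_p_conjugate_inverse[OF p_q_conjugate])

lemma phi_q_phi_p [simp]: "phi_p q (phi_p p x) = x"
  by (rule phi_p_conjugate_inverse) (simp add: p_q_conjugate mult.commute)

lemma continuous_on_phi_p_p: "continuous_on S f \<Longrightarrow> continuous_on S (\<lambda>x. phi_p p (f x))"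
  using p_ge_2 by (intro continuous_on_phi_p_comp) auto

lemma continuous_on_phi_p_q: "continuous_on S f \<Longrightarrow> continuous_on S (\<lambda>x. phi_p q (f x))"
  using q_gt_1 by (intro continuous_on_phi_p_comp) auto

lemma continuous_on_weight_Icc: "0 \<le> c \<Longrightarrow> continuous_on {c..d} \<rho>"
  by (rule continuous_on_subset[OF continuous_on_weight[OF theta_ge_1]]) auto

lemma weight_eq_0_at: "0 \<le> c \<Longrightarrow> c \<le> t \<Longrightarrow> \<rho> t = 0 \<Longrightarrow> t = c"
  using weight_eq_0_imp[of t \<theta>] by auto

text \<open>Where the weight vanishes (\<open>r = 0\<close>, \<open>\<theta> > 1\<close>) the quotient \<open>w / \<rho>\<close> reads \<open>w / 0 = 0\<close>,
  which is the right value only because \<open>w\<close> vanishes there as well; hence the recurring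
  hypothesis \<open>\<rho> c = 0 \<Longrightarrow> w c = 0\<close>.\<close>

definition solves :: "real \<Rightarrow> real \<Rightarrow> (real \<Rightarrow> real) \<Rightarrow> (real \<Rightarrow> real) \<Rightarrow> bool" where
  "solves c d u w \<longleftrightarrow> (\<forall>t\<in>{c..d}.
     (u has_real_derivative phi_p q (w t / \<rho> t)) (at t within {c..d}) \<and>
     (w has_real_derivative - (\<rho> t * phi_p p (u t))) (at t within {c..d}))"

definition solves_integral :: "real \<Rightarrow> real \<Rightarrow> (real \<Rightarrow> real) \<Rightarrow> (real \<Rightarrow> real) \<Rightarrow> bool" where
  "solves_integral c d u w \<longleftrightarrow>
     continuous_on {c..d} u \<and> continuous_on {c..d} (\<lambda>s. phi_p q (w s / \<rho> s)) \<and>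
     (\<forall>t\<in>{c..d}. u t = u c + integral {c..t} (\<lambda>s. phi_p q (w s / \<rho> s)) \<and>
                 w t = w c + integral {c..t} (\<lambda>s. - (\<rho> s * phi_p p (u s))))"

lemma solves_subset: "solves c d u w \<Longrightarrow> c \<le> c' \<Longrightarrow> d' \<le> d \<Longrightarrow> solves c' d' u w"
  unfolding solves_def by (meson DERIV_subset atLeastAtMost_iff atLeastatMost_subset_iff order_trans)

lemma solves_cong:
  assumes "solves c d u w" "\<And>t. t \<in> {c..d} \<Longrightarrow> u' t = u t" "\<And>t. t \<in> {c..d} \<Longrightarrow> w' t = w t"
  shows "solves c d u' w'"
  unfolding solves_def
proof (intro ballI conjI)
  fix t assume t: "t \<in> {c..d}"
  have "(u has_real_derivative phi_p q (w t / \<rho> t)) (at t within {c..d})"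
    using assms(1) t by (simp add: solves_def)
  then show "(u' has_real_derivative phi_p q (w' t / \<rho> t)) (at t within {c..d})"
    unfolding assms(3)[OF t]
    by (rule has_field_derivative_transform_within[OF _ zero_less_one t]) (simp add: assms(2))
  have "(w has_real_derivative - (\<rho> t * phi_p p (u t))) (at t within {c..d})"
    using assms(1) t by (simp add: solves_def)
  then show "(w' has_real_derivative - (\<rho> t * phi_p p (u' t))) (at t within {c..d})"
    unfolding assms(2)[OF t]
    by (rule has_field_derivative_transform_within[OF _ zero_less_one t]) (simp add: assms(3))
qed

lemma solves_continuous_on:
  assumes "solves c d u w"
  shows "continuous_on {c..d} u" "continuous_on {c..d} w"
  using assms unfolding solves_def by (auto intro: DERIV_continuous_on)

lemma continuous_on_flux_div_weight:
  assumes "continuous_on {c..d} u" "0 \<le> c" "\<rho> c = 0 \<Longrightarrow> w c = 0"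
    and "\<And>t. t \<in> {c..d} \<Longrightarrow> (w has_real_derivative - (\<rho> t * phi_p p (u t))) (at t within {c..d})"
  shows "continuous_on {c..d} (\<lambda>s. w s / \<rho> s)"
proof -
  have "bounded ((\<lambda>t. phi_p p (u t)) ` {c..d})"
    by (intro compact_imp_bounded compact_continuous_image continuous_on_phi_p_p assms(1)) auto
  then obtain M where M: "0 < M" "\<forall>t\<in>{c..d}. \<bar>phi_p p (u t)\<bar> \<le> M"
    unfolding bounded_pos by auto
  show ?thesis
  proof (rule continuous_on_divide_weight[OF theta_ge_1 assms(2) less_imp_le[OF M(1)] assms(4)])
    show "\<bar>- (\<rho> t * phi_p p (u t))\<bar> \<le> \<rho> t * M" if "t \<in> {c..d}" for t
      using M(2) that weight_nonneg[of \<theta> t] by (simp add: abs_mult mult_left_mono)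
  qed (use assms(3) in auto)
qed

lemma continuous_on_solves_ratio:
  assumes "solves c d u w" "0 \<le> c" "\<rho> c = 0 \<Longrightarrow> w c = 0"
  shows "continuous_on {c..d} (\<lambda>s. w s / \<rho> s)"
  using assms by (intro continuous_on_flux_div_weight solves_continuous_on(1)) (auto simp: solves_def)

lemma solves_imp_solves_integral:
  assumes "solves c d u w" "0 \<le> c" "\<rho> c = 0 \<Longrightarrow> w c = 0"
  shows "solves_integral c d u w"
  unfolding solves_integral_def
proof (intro conjI ballI)
  show "continuous_on {c..d} u" by (rule solves_continuous_on[OF assms(1)])
  show "continuous_on {c..d} (\<lambda>s. phi_p q (w s / \<rho> s))"
    by (intro continuous_on_phi_p_q continuous_on_solves_ratio[OF assms])
  fix t assume t: "t \<in> {c..d}"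
  show "u t = u c + integral {c..t} (\<lambda>s. phi_p q (w s / \<rho> s))"
    using assms(1) by (intro has_derivative_imp_integral_eq[OF _ t]) (simp add: solves_def)
  show "w t = w c + integral {c..t} (\<lambda>s. - (\<rho> s * phi_p p (u s)))"
    using assms(1) by (intro has_derivative_imp_integral_eq[OF _ t]) (simp add: solves_def)
qed

lemma solves_integral_imp_solves:
  assumes "solves_integral c d u w" "0 \<le> c"
  shows "solves c d u w"
proof -
  have u: "continuous_on {c..d} u" and ratio: "continuous_on {c..d} (\<lambda>s. phi_p q (w s / \<rho> s))"
    and eqs: "\<And>t. t \<in> {c..d} \<Longrightarrow> u t = u c + integral {c..t} (\<lambda>s. phi_p q (w s / \<rho> s))"
      "\<And>t. t \<in> {c..d} \<Longrightarrow> w t = w c + integral {c..t} (\<lambda>s. - (\<rho> s * phi_p p (u s)))"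
    using assms(1) unfolding solves_integral_def by blast+
  have "continuous_on {c..d} (\<lambda>s. - (\<rho> s * phi_p p (u s)))"
    by (intro continuous_on_minus continuous_on_mult continuous_on_weight_Icc[OF assms(2)]
        continuous_on_phi_p_p u)
  then show ?thesis
    unfolding solves_def using integral_eq_imp_has_derivative[OF ratio eqs(1)]
      integral_eq_imp_has_derivative[OF _ eqs(2)] by blast
qed

definition energy :: "(real \<Rightarrow> real) \<Rightarrow> (real \<Rightarrow> real) \<Rightarrow> real \<Rightarrow> real" where
  "energy u w t = \<bar>u t\<bar> powr p / p + \<bar>w t / \<rho> t\<bar> powr q / q"

lemma energy_nonneg: "0 \<le> energy u w t"
  using p_ge_2 q_gt_1 unfolding energy_def by (intro add_nonneg_nonneg divide_nonneg_pos) auto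

text \<open>With \<open>V = w / \<rho>\<close> the terms \<open>\<phi>\<^sub>p(u) \<phi>\<^sub>q(V)\<close> coming from the two summands cancel,
  leaving \<open>-\<phi>\<^sub>q(V) V \<rho>'/\<rho>\<close>, which is nonpositive because the weight is nondecreasing.\<close>

lemma energy_has_nonpos_derivative:
  assumes "0 < t"
    and du: "(u has_real_derivative phi_p q (w t / \<rho> t)) (at t)"
    and dw: "(w has_real_derivative - (\<rho> t * phi_p p (u t))) (at t)"
  shows "\<exists>D. (energy u w has_real_derivative D) (at t) \<and> D \<le> 0"
proof -
  define V where "V = w t / \<rho> t"
  define \<rho>' where "\<rho>' = (\<theta> - 1) * t powr (\<theta> - 2)"
  have pos: "0 < \<rho> t" using assms(1) by (rule weight_pos)
  have "((\<lambda>s. w s / \<rho> s) has_real_derivative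
      (- (\<rho> t * phi_p p (u t)) * \<rho> t - w t * \<rho>') / (\<rho> t * \<rho> t)) (at t)"
    using DERIV_divide[OF dw has_real_derivative_weight[OF assms(1)]] pos by (simp add: \<rho>'_def)
  moreover have "(- (\<rho> t * phi_p p (u t)) * \<rho> t - w t * \<rho>') / (\<rho> t * \<rho> t)
      = - phi_p p (u t) - V * \<rho>' / \<rho> t"
    using pos by (simp add: V_def field_simps)
  ultimately have dV: "((\<lambda>s. w s / \<rho> s) has_real_derivative - phi_p p (u t) - V * \<rho>' / \<rho> t) (at t)"
    by simp
  have "(energy u w has_real_derivative p * phi_p p (u t) * phi_p q (w t / \<rho> t) / p +
      q * phi_p q (w t / \<rho> t) * (- phi_p p (u t) - V * \<rho>' / \<rho> t) / q) (at t)"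
    unfolding energy_def[abs_def]
    by (intro DERIV_add DERIV_cdivide DERIV_chain2[OF has_real_derivative_abs_powr] du dV)
      (use p_ge_2 q_gt_1 in auto)
  then have "(energy u w has_real_derivative p * phi_p p (u t) * phi_p q V / p +
      q * phi_p q V * (- phi_p p (u t) - V * \<rho>' / \<rho> t) / q) (at t)"
    by (simp add: V_def)
  moreover have "p * phi_p p (u t) * phi_p q V / p + q * phi_p q V * (- phi_p p (u t) - V * \<rho>' / \<rho> t) / q
      = - (phi_p q V * V) * \<rho>' / \<rho> t"
    using p_ge_2 q_gt_1 pos by (simp add: field_simps)
  moreover have "- (phi_p q V * V) * \<rho>' / \<rho> t \<le> 0"
    using phi_p_mult_self_nonneg[of q V] pos theta_ge_1
    by (intro divide_nonpos_pos mult_nonpos_nonneg) (auto simp: \<rho>'_def)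
  ultimately show ?thesis by auto
qed

lemma energy_antimono:
  assumes S: "solves c d u w" and "0 \<le> c" "\<rho> c = 0 \<Longrightarrow> w c = 0"
    and "c \<le> x" "x \<le> y" "y \<le> d"
  shows "energy u w y \<le> energy u w x"
proof (rule DERIV_nonpos_imp_decreasing_open[OF \<open>x \<le> y\<close>])
  have "continuous_on {x..y} u" "continuous_on {x..y} (\<lambda>s. w s / \<rho> s)"
    using solves_continuous_on(1)[OF S] continuous_on_solves_ratio[OF assms(1-3)] assms(4-6)
    by (auto elim: continuous_on_subset)
  then have "continuous_on {x..y} (\<lambda>s. \<bar>u s\<bar> powr p)"
    "continuous_on {x..y} (\<lambda>s. \<bar>w s / \<rho> s\<bar> powr q)"
    using p_ge_2 q_gt_1
    by (intro continuous_on_powr'[OF continuous_on_rabs continuous_on_const]; simp)+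
  then show "continuous_on {x..y} (energy u w)"
    unfolding energy_def[abs_def] using p_ge_2 q_gt_1
    by (intro continuous_on_add continuous_on_divide continuous_on_const) auto
  fix t assume t: "x < t" "t < y"
  then have "at t within {c..d} = at t" using assms(4-6) by (intro at_within_Icc_at) auto
  then have "(u has_real_derivative phi_p q (w t / \<rho> t)) (at t)"
    "(w has_real_derivative - (\<rho> t * phi_p p (u t))) (at t)"
    using S t assms(4-6) unfolding solves_def by (metis atLeastAtMost_iff less_imp_le order_trans)+
  moreover have "0 < t" using t assms(2,4) by linarith
  ultimately show "\<exists>D. (energy u w has_real_derivative D) (at t) \<and> D \<le> 0"
    by (intro energy_has_nonpos_derivative)
qed

lemma solves_zero_data:
  assumes "solves c d u w" "0 \<le> c" "u c = 0" "w c = 0" "t \<in> {c..d}"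
  shows "u t = 0 \<and> w t = 0"
proof -
  have "energy u w t \<le> energy u w c"
    using energy_antimono[OF assms(1,2)] assms(4,5) by auto
  also have "energy u w c = 0" using assms(3,4) p_ge_2 q_gt_1 by (simp add: energy_def)
  finally have sum: "\<bar>u t\<bar> powr p / p + \<bar>w t / \<rho> t\<bar> powr q / q = 0"
    using energy_nonneg[of u w t] unfolding energy_def by linarith
  have "0 \<le> \<bar>u t\<bar> powr p / p" "0 \<le> \<bar>w t / \<rho> t\<bar> powr q / q"
    using p_ge_2 q_gt_1 by auto
  then have "\<bar>u t\<bar> powr p / p = 0" "\<bar>w t / \<rho> t\<bar> powr q / q = 0"
    using sum by linarith+
  then have "u t = 0" "w t / \<rho> t = 0" using p_ge_2 q_gt_1 by simp_all
  moreover have "w t = 0"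
  proof (cases "\<rho> t = 0")
    case True
    then show ?thesis using weight_eq_0_at[of c t] assms(2,4,5) by auto
  qed (use \<open>w t / \<rho> t = 0\<close> in simp)
  ultimately show ?thesis by simp
qed

lemma abs_le_of_energy_le:
  assumes "energy u w t \<le> G"
  shows "\<bar>u t\<bar> \<le> max 1 (p * G)" "\<bar>w t / \<rho> t\<bar> \<le> max 1 (q * G)"
proof -
  have le_max: "x \<le> max 1 (s * G)" if "x powr s / s \<le> G" "1 \<le> s" "0 \<le> x" for x s :: real
  proof (cases "x \<le> 1")
    case False
    then have "x powr 1 \<le> x powr s" using that by (intro powr_mono) auto
    then show ?thesis using that False by (simp add: field_simps)
  qed simp
  have "\<bar>u t\<bar> powr p / p \<le> G" "\<bar>w t / \<rho> t\<bar> powr q / q \<le> G"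
    using assms p_ge_2 q_gt_1 unfolding energy_def
    by (smt (verit) divide_nonneg_pos powr_ge_zero)+
  then show "\<bar>u t\<bar> \<le> max 1 (p * G)" "\<bar>w t / \<rho> t\<bar> \<le> max 1 (q * G)"
    using le_max p_ge_2 q_gt_1 by auto
qed

lemma solves_lipschitz:
  assumes S: "solves c d u w" and "0 \<le> c" "\<rho> c = 0 \<Longrightarrow> w c = 0"
  shows "(1 + max 1 (q * energy u w c))-lipschitz_on {c..d} u"
    and "(\<rho> d * max 1 (p * energy u w c) powr (p - 1))-lipschitz_on {c..d} w"
proof -
  have bounds: "\<bar>u t\<bar> \<le> max 1 (p * energy u w c)" "\<bar>w t / \<rho> t\<bar> \<le> max 1 (q * energy u w c)"
    if "t \<in> {c..d}" for t
  proof -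
    have "energy u w t \<le> energy u w c" using energy_antimono[OF assms, of c t] that by auto
    then show "\<bar>u t\<bar> \<le> max 1 (p * energy u w c)" "\<bar>w t / \<rho> t\<bar> \<le> max 1 (q * energy u w c)"
      by (rule abs_le_of_energy_le)+
  qed
  show "(1 + max 1 (q * energy u w c))-lipschitz_on {c..d} u"
  proof (rule has_derivative_bound_imp_lipschitz_on)
    show "(u has_real_derivative phi_p q (w t / \<rho> t)) (at t within {c..d})" if "t \<in> {c..d}" for t
      using S that by (simp add: solves_def)
    show "\<bar>phi_p q (w t / \<rho> t)\<bar> \<le> 1 + max 1 (q * energy u w c)" if "t \<in> {c..d}" for t
      using abs_phi_p_le_1_plus[of q "w t / \<rho> t"] bounds(2)[OF that] q_gt_1 q_le_2 by auto
  qed auto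
  show "(\<rho> d * max 1 (p * energy u w c) powr (p - 1))-lipschitz_on {c..d} w"
  proof (rule has_derivative_bound_imp_lipschitz_on)
    show "(w has_real_derivative - (\<rho> t * phi_p p (u t))) (at t within {c..d})" if "t \<in> {c..d}" for t
      using S that by (simp add: solves_def)
    show "\<bar>- (\<rho> t * phi_p p (u t))\<bar> \<le> \<rho> d * max 1 (p * energy u w c) powr (p - 1)"
      if "t \<in> {c..d}" for t
    proof -
      have "\<bar>phi_p p (u t)\<bar> \<le> max 1 (p * energy u w c) powr (p - 1)"
        using abs_phi_p_le bounds(1)[OF that] p_ge_2 by auto
      moreover have "0 \<le> \<rho> t" "\<rho> t \<le> \<rho> d"
        using that assms(2) by (auto intro: weight_nonneg weight_mono[OF theta_ge_1])
      ultimately show ?thesis by (simp add: abs_mult mult_mono)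
    qed
  qed (simp add: weight_nonneg)
qed

end

section \<open>The Picard operator near an initial point\<close>

locale p_laplacian_ivp = p_laplacian_ode +
  fixes c a wc :: real
  assumes c_nonneg: "0 \<le> c" and flux_0_if_weight_0: "\<rho> c = 0 \<Longrightarrow> wc = 0"
begin

definition flux :: "(real \<Rightarrow> real) \<Rightarrow> real \<Rightarrow> real" where
  "flux f s = wc + integral {c..s} (\<lambda>\<tau>. - (\<rho> \<tau> * phi_p p (f \<tau>)))"

definition flux_ratio :: "(real \<Rightarrow> real) \<Rightarrow> real \<Rightarrow> real" where
  "flux_ratio f s = flux f s / \<rho> s"

definition picard :: "(real \<Rightarrow> real) \<Rightarrow> real \<Rightarrow> real" where
  "picard f t = a + integral {c..t} (\<lambda>s. phi_p q (flux_ratio f s))"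

lemma flux_start [simp]: "flux f c = wc" and picard_start [simp]: "picard f c = a"
  by (simp_all add: flux_def picard_def)

lemma continuous_on_source:
  "continuous_on {c..d} f \<Longrightarrow> continuous_on {c..d} (\<lambda>\<tau>. - (\<rho> \<tau> * phi_p p (f \<tau>)))"
  by (intro continuous_on_minus continuous_on_mult continuous_on_weight_Icc[OF c_nonneg]
      continuous_on_phi_p_p)

lemma abs_source_le:
  assumes "\<tau> \<in> {c..s}" "\<bar>f \<tau>\<bar> \<le> K"
  shows "\<bar>- (\<rho> \<tau> * phi_p p (f \<tau>))\<bar> \<le> \<rho> s * K powr (p - 1)"
proof -
  have "\<bar>phi_p p (f \<tau>)\<bar> \<le> K powr (p - 1)" using abs_phi_p_le assms(2) p_ge_2 by auto
  moreover have "0 \<le> \<rho> \<tau>" "\<rho> \<tau> \<le> \<rho> s"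
    using assms(1) c_nonneg by (auto intro: weight_nonneg weight_mono[OF theta_ge_1])
  ultimately show ?thesis by (simp add: abs_mult mult_mono)
qed

lemma has_real_derivative_flux:
  "continuous_on {c..d} f \<Longrightarrow> t \<in> {c..d} \<Longrightarrow>
    (flux f has_real_derivative - (\<rho> t * phi_p p (f t))) (at t within {c..d})"
  by (rule integral_eq_imp_has_derivative[OF continuous_on_source]) (simp_all add: flux_def)

lemma continuous_on_flux_ratio:
  assumes "continuous_on {c..d} f"
  shows "continuous_on {c..d} (flux_ratio f)"
  unfolding flux_ratio_def[abs_def]
proof (rule continuous_on_flux_div_weight[OF assms c_nonneg])
  show "\<rho> c = 0 \<Longrightarrow> flux f c = 0" unfolding flux_start by (rule flux_0_if_weight_0)
qed (rule has_real_derivative_flux[OF assms])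

lemma continuous_on_picard: "continuous_on {c..d} f \<Longrightarrow> continuous_on {c..d} (picard f)"
  unfolding picard_def[abs_def]
  by (intro continuous_intros indefinite_integral_continuous_1 integrable_continuous_interval
      continuous_on_phi_p_q continuous_on_flux_ratio)

lemma flux_cong: "(\<And>s. s \<in> {c..t} \<Longrightarrow> f s = g s) \<Longrightarrow> flux f t = flux g t"
  unfolding flux_def by (intro arg_cong2[where f = "(+)"] refl integral_cong) auto

lemma flux_ratio_deviation:
  assumes "c < s" "f \<in> tube c s a D"
  shows "\<bar>flux_ratio f s - wc / \<rho> s\<bar> \<le> (s - c) * (\<bar>a\<bar> + D) powr (p - 1)"
proof -
  have pos: "0 < \<rho> s" using assms(1) c_nonneg by (intro weight_pos) auto
  define I where "I = integral {c..s} (\<lambda>\<tau>. - (\<rho> \<tau> * phi_p p (f \<tau>)))"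
  have "\<bar>I\<bar> \<le> \<rho> s * (\<bar>a\<bar> + D) powr (p - 1) * (s - c)"
    unfolding I_def using assms
    by (intro abs_integral_le continuous_on_source abs_source_le abs_le_of_tube) (auto simp: tube_def)
  moreover have "flux_ratio f s - wc / \<rho> s = I / \<rho> s"
    unfolding flux_ratio_def flux_def I_def[symmetric] by (simp add: add_divide_distrib)
  ultimately show ?thesis using pos by (simp add: abs_divide pos_divide_le_eq mult_ac)
qed

lemma abs_flux_ratio_le:
  assumes "c \<le> s" "f \<in> tube c s a D"
  shows "\<bar>flux_ratio f s\<bar> \<le> \<bar>wc\<bar> / \<rho> c + (s - c) * (\<bar>a\<bar> + D) powr (p - 1)"
proof (cases "s = c")
  case False
  have "\<bar>wc\<bar> / \<rho> s \<le> \<bar>wc\<bar> / \<rho> c"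
  proof (cases "wc = 0")
    case False
    then have "0 < \<rho> c" using flux_0_if_weight_0 weight_nonneg[of \<theta> c] by fastforce
    then show ?thesis
      using weight_mono[OF theta_ge_1 c_nonneg assms(1)] by (intro divide_left_mono) auto
  qed simp
  moreover have "\<bar>wc / \<rho> s\<bar> = \<bar>wc\<bar> / \<rho> s" by (simp add: abs_divide weight_nonneg)
  ultimately show ?thesis
    using flux_ratio_deviation[of s f D] False assms by linarith
qed (simp add: flux_ratio_def abs_divide weight_nonneg)

lemma abs_flux_ratio_diff_le:
  assumes "c \<le> s" "f \<in> tube c s a D" "g \<in> tube c s a D" "\<forall>\<tau>\<in>{c..s}. \<bar>f \<tau> - g \<tau>\<bar> \<le> d"
  shows "\<bar>flux_ratio f s - flux_ratio g s\<bar> \<le> (s - c) * ((p - 1) * (\<bar>a\<bar> + D) powr (p - 2) * d)"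
proof (cases "s = c")
  case False
  define L where "L = (p - 1) * (\<bar>a\<bar> + D) powr (p - 2)"
  have pos: "0 < \<rho> s" using assms(1) False c_nonneg by (intro weight_pos) auto
  have cont: "continuous_on {c..s} f" "continuous_on {c..s} g" using assms(2,3) by (auto simp: tube_def)
  define J where "J = integral {c..s} (\<lambda>\<tau>. - (\<rho> \<tau> * phi_p p (f \<tau>)) - - (\<rho> \<tau> * phi_p p (g \<tau>)))"
  have "flux_ratio f s - flux_ratio g s = J / \<rho> s"
    using integral_diff[OF integrable_continuous_interval integrable_continuous_interval,
        OF continuous_on_source continuous_on_source, OF cont]
    by (simp add: J_def flux_ratio_def flux_def diff_divide_distrib)
  moreover have "\<bar>J\<bar> \<le> \<rho> s * (L * d) * (s - c)"
    unfolding J_def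
  proof (rule abs_integral_le[OF assms(1)])
    show "continuous_on {c..s} (\<lambda>\<tau>. - (\<rho> \<tau> * phi_p p (f \<tau>)) - - (\<rho> \<tau> * phi_p p (g \<tau>)))"
      by (intro continuous_on_diff continuous_on_source cont)
    fix \<tau> assume \<tau>: "\<tau> \<in> {c..s}"
    have "\<bar>phi_p p (f \<tau>) - phi_p p (g \<tau>)\<bar> \<le> L * \<bar>f \<tau> - g \<tau>\<bar>"
      unfolding L_def using p_ge_2 abs_le_of_tube[OF assms(2) \<tau>] abs_le_of_tube[OF assms(3) \<tau>]
      by (rule phi_p_lipschitz_bounded)
    also have "\<dots> \<le> L * d" using assms(4) \<tau> p_ge_2 by (intro mult_left_mono) (auto simp: L_def)
    finally have "\<bar>phi_p p (f \<tau>) - phi_p p (g \<tau>)\<bar> \<le> L * d" .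
    moreover have "0 \<le> \<rho> \<tau>" "\<rho> \<tau> \<le> \<rho> s"
      using \<tau> c_nonneg by (auto intro: weight_nonneg weight_mono[OF theta_ge_1])
    ultimately have "\<rho> \<tau> * \<bar>phi_p p (f \<tau>) - phi_p p (g \<tau>)\<bar> \<le> \<rho> s * (L * d)"
      by (meson abs_ge_zero mult_mono order_trans)
    then show "\<bar>- (\<rho> \<tau> * phi_p p (f \<tau>)) - - (\<rho> \<tau> * phi_p p (g \<tau>))\<bar> \<le> \<rho> s * (L * d)"
      using \<open>0 \<le> \<rho> \<tau>\<close> by (simp add: abs_mult right_diff_distrib[symmetric] abs_minus_commute)
  qed
  ultimately show ?thesis using pos by (simp add: abs_divide pos_divide_le_eq L_def mult_ac)
qed (simp add: flux_ratio_def)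

lemma flux_ratio_near_start:
  assumes "wc \<noteq> 0"
  obtains \<delta> where "0 < \<delta>" "\<And>f s. c < s \<Longrightarrow> s \<le> c + \<delta> \<Longrightarrow> f \<in> tube c s a 1 \<Longrightarrow>
    \<bar>flux_ratio f s - wc / \<rho> c\<bar> \<le> \<bar>wc / \<rho> c\<bar> / 2"
proof -
  have pos_c: "0 < \<rho> c" using assms flux_0_if_weight_0 weight_nonneg[of \<theta> c] by fastforce
  define b where "b = wc / \<rho> c"
  define B where "B = (\<bar>a\<bar> + 1) powr (p - 1)"
  have "0 < \<bar>b\<bar>" "0 \<le> B" using assms pos_c by (simp_all add: b_def B_def)
  have "\<rho> s \<noteq> 0" if "s \<in> {c..}" for s
    using weight_mono[OF theta_ge_1 c_nonneg, of s] that pos_c by auto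
  then have "continuous_on {c..} (\<lambda>s. wc / \<rho> s)"
    using continuous_on_subset[OF continuous_on_weight[OF theta_ge_1], of "{c..}"] c_nonneg
    by (intro continuous_on_divide continuous_on_const) auto
  moreover have "c \<in> {c..}" "0 < \<bar>b\<bar> / 4" using \<open>0 < \<bar>b\<bar>\<close> by auto
  ultimately obtain \<delta>1 where "0 < \<delta>1"
    and \<delta>1: "\<And>s. s \<in> {c..} \<Longrightarrow> dist s c < \<delta>1 \<Longrightarrow> dist (wc / \<rho> s) b < \<bar>b\<bar> / 4"
    unfolding continuous_on_iff b_def by blast
  define \<delta> where "\<delta> = min (\<delta>1 / 2) (\<bar>b\<bar> / (4 * (B + 1)))"
  show thesis
  proof (rule that[of \<delta>])
    show "0 < \<delta>" using \<open>0 < \<delta>1\<close> \<open>0 < \<bar>b\<bar>\<close> \<open>0 \<le> B\<close> by (simp add: \<delta>_def)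
    fix f s assume s: "c < s" "s \<le> c + \<delta>" and f: "f \<in> tube c s a 1"
    have "\<delta> \<le> \<delta>1 / 2" unfolding \<delta>_def by (rule min.cobounded1)
    then have near_b: "\<bar>wc / \<rho> s - b\<bar> \<le> \<bar>b\<bar> / 4"
      using \<delta>1[of s] s \<open>0 < \<delta>1\<close> by (simp add: dist_real_def)
    have "\<bar>flux_ratio f s - wc / \<rho> s\<bar> \<le> (s - c) * B"
      using flux_ratio_deviation[OF s(1) f] by (simp add: B_def)
    also have "\<dots> \<le> \<bar>b\<bar> / (4 * (B + 1)) * B"
      using s \<open>0 \<le> B\<close> by (intro mult_right_mono) (auto simp: \<delta>_def)
    also have "\<dots> \<le> \<bar>b\<bar> / 4" using \<open>0 \<le> B\<close> \<open>0 < \<bar>b\<bar>\<close> by (simp add: field_simps)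
    finally have "\<bar>flux_ratio f s - wc / \<rho> s\<bar> + \<bar>wc / \<rho> s - b\<bar> \<le> \<bar>b\<bar> / 4 + \<bar>b\<bar> / 4"
      using near_b by (rule add_mono)
    moreover have "\<bar>flux_ratio f s - b\<bar> \<le> \<bar>flux_ratio f s - wc / \<rho> s\<bar> + \<bar>wc / \<rho> s - b\<bar>"
      using abs_triangle_ineq[of "flux_ratio f s - wc / \<rho> s" "wc / \<rho> s - b"] by simp
    ultimately show "\<bar>flux_ratio f s - wc / \<rho> c\<bar> \<le> \<bar>wc / \<rho> c\<bar> / 2"
      unfolding b_def[symmetric] by linarith
  qed
qed

lemma sgn_flux_ratio_le:
  assumes "wc = 0" "a \<noteq> 0" "c < s" "f \<in> tube c s a (\<bar>a\<bar> / 2)"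
  shows "sgn a * flux_ratio f s \<le> - ((\<bar>a\<bar> / 2) powr (p - 1) * (s - c) / \<theta>)"
proof -
  define m where "m = (\<bar>a\<bar> / 2) powr (p - 1)"
  have pos: "0 < \<rho> s" using assms(3) c_nonneg by (intro weight_pos) auto
  have lower: "m * \<rho> \<tau> \<le> sgn a * (\<rho> \<tau> * phi_p p (f \<tau>))" if \<tau>: "\<tau> \<in> {c..s}" for \<tau>
  proof -
    have "\<bar>f \<tau> - a\<bar> \<le> \<bar>a\<bar> / 2" using assms(4) \<tau> by (auto simp: tube_def)
    then have "m \<le> sgn a * phi_p p (f \<tau>)"
      unfolding m_def using p_ge_2 assms(2) by (intro sgn_mult_phi_p_ge) auto
    then have "m * \<rho> \<tau> \<le> sgn a * phi_p p (f \<tau>) * \<rho> \<tau>"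
      by (rule mult_right_mono) (rule weight_nonneg)
    then show ?thesis by (simp add: algebra_simps)
  qed
  define I where "I = integral {c..s} (\<lambda>\<tau>. sgn a * (\<rho> \<tau> * phi_p p (f \<tau>)))"
  have m_int: "((\<lambda>\<tau>. m * \<rho> \<tau>) has_integral m * (s powr \<theta> / \<theta> - c powr \<theta> / \<theta>)) {c..s}"
    using has_integral_weight[OF theta_ge_1 c_nonneg, of s] assms(3)
    by (intro has_integral_mult_right) auto
  have "(\<lambda>\<tau>. sgn a * (\<rho> \<tau> * phi_p p (f \<tau>))) integrable_on {c..s}"
    using assms(4) unfolding tube_def
    by (intro integrable_continuous_interval continuous_on_mult continuous_on_const
        continuous_on_weight_Icc[OF c_nonneg] continuous_on_phi_p_p) auto
  then have "integral {c..s} (\<lambda>\<tau>. m * \<rho> \<tau>) \<le> I"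
    unfolding I_def using lower m_int by (intro integral_le) auto
  moreover have "integral {c..s} (\<lambda>\<tau>. m * \<rho> \<tau>) = m * (s powr \<theta> / \<theta> - c powr \<theta> / \<theta>)"
    by (rule integral_unique[OF m_int])
  ultimately have "m * (s powr \<theta> / \<theta> - c powr \<theta> / \<theta>) \<le> I" by linarith
  moreover have "m * ((s - c) * \<rho> s / \<theta>) \<le> m * (s powr \<theta> / \<theta> - c powr \<theta> / \<theta>)"
    using weight_integral_lower_bound[OF theta_ge_1 c_nonneg, of s] assms(3)
    by (intro mult_left_mono) (auto simp: m_def)
  moreover have "sgn a * flux_ratio f s = - I / \<rho> s"
    unfolding I_def flux_ratio_def flux_def by (simp add: assms(1))
  ultimately have "m * ((s - c) * \<rho> s / \<theta>) \<le> - (sgn a * flux_ratio f s) * \<rho> s"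
    using pos by simp
  then have "m * (s - c) / \<theta> * \<rho> s \<le> - (sgn a * flux_ratio f s) * \<rho> s"
    by (simp add: algebra_simps)
  then have "m * (s - c) / \<theta> \<le> - (sgn a * flux_ratio f s)"
    using pos by (rule mult_right_le_imp_le)
  then show ?thesis by (simp add: m_def)
qed

lemma phi_q_flux_ratio_diff_le:
  assumes "c < s" "0 < m" "f \<in> tube c s a D" "g \<in> tube c s a D" "\<forall>\<tau>\<in>{c..s}. \<bar>f \<tau> - g \<tau>\<bar> \<le> d"
    and "(m \<le> flux_ratio f s \<and> m \<le> flux_ratio g s) \<or> (flux_ratio f s \<le> - m \<and> flux_ratio g s \<le> - m)"
  shows "\<bar>phi_p q (flux_ratio f s) - phi_p q (flux_ratio g s)\<bar>
    \<le> (q - 1) * m powr (q - 2) * ((s - c) * ((p - 1) * (\<bar>a\<bar> + D) powr (p - 2) * d))"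
proof -
  have "\<bar>phi_p q (flux_ratio f s) - phi_p q (flux_ratio g s)\<bar>
      \<le> (q - 1) * m powr (q - 2) * \<bar>flux_ratio f s - flux_ratio g s\<bar>"
    using q_gt_1 q_le_2 assms(2,6) by (rule phi_p_lipschitz_away_from_0)
  also have "\<dots> \<le> (q - 1) * m powr (q - 2) * ((s - c) * ((p - 1) * (\<bar>a\<bar> + D) powr (p - 2) * d))"
    using abs_flux_ratio_diff_le[OF _ assms(3-5)] assms(1) q_gt_1 by (intro mult_left_mono) auto
  finally show ?thesis .
qed

lemma phi_q_flux_ratio_lipschitz_flux_ne_0:
  assumes "wc \<noteq> 0"
  obtains \<delta> C where "0 < \<delta>" "0 \<le> C"
    "\<And>f g d s. c < s \<Longrightarrow> s \<le> c + \<delta> \<Longrightarrow> f \<in> tube c s a 1 \<Longrightarrow> g \<in> tube c s a 1 \<Longrightarrow>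
      \<forall>\<tau>\<in>{c..s}. \<bar>f \<tau> - g \<tau>\<bar> \<le> d \<Longrightarrow>
      \<bar>phi_p q (flux_ratio f s) - phi_p q (flux_ratio g s)\<bar> \<le> C * d"
proof -
  obtain \<delta>0 where "0 < \<delta>0" and near: "\<And>f s. c < s \<Longrightarrow> s \<le> c + \<delta>0 \<Longrightarrow> f \<in> tube c s a 1 \<Longrightarrow>
      \<bar>flux_ratio f s - wc / \<rho> c\<bar> \<le> \<bar>wc / \<rho> c\<bar> / 2"
    using flux_ratio_near_start[OF assms] by blast
  define m where "m = \<bar>wc / \<rho> c\<bar> / 2"
  define C where "C = (q - 1) * m powr (q - 2) * ((p - 1) * (\<bar>a\<bar> + 1) powr (p - 2))"
  have "\<rho> c \<noteq> 0" using assms flux_0_if_weight_0 by blast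
  then have "0 < m" using assms by (simp add: m_def)
  have "0 \<le> C" using q_gt_1 p_ge_2 by (simp add: C_def)
  show thesis
  proof (rule that[of "min \<delta>0 1" C])
    fix f g d s
    assume s: "c < s" "s \<le> c + min \<delta>0 1" and f: "f \<in> tube c s a 1" and g: "g \<in> tube c s a 1"
      and d: "\<forall>\<tau>\<in>{c..s}. \<bar>f \<tau> - g \<tau>\<bar> \<le> d"
    have "\<bar>flux_ratio f s - wc / \<rho> c\<bar> \<le> m" "\<bar>flux_ratio g s - wc / \<rho> c\<bar> \<le> m"
      using near[OF s(1) _ f] near[OF s(1) _ g] s by (auto simp: m_def)
    then have side: "(m \<le> flux_ratio f s \<and> m \<le> flux_ratio g s) \<or>
        (flux_ratio f s \<le> - m \<and> flux_ratio g s \<le> - m)"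
      unfolding m_def by (cases "0 \<le> wc / \<rho> c") (auto simp: abs_if split: if_splits)
    have "0 \<le> d" using d s by force
    have "\<bar>phi_p q (flux_ratio f s) - phi_p q (flux_ratio g s)\<bar>
        \<le> (q - 1) * m powr (q - 2) * ((s - c) * ((p - 1) * (\<bar>a\<bar> + 1) powr (p - 2) * d))"
      by (rule phi_q_flux_ratio_diff_le[OF s(1) \<open>0 < m\<close> f g d side])
    also have "\<dots> \<le> (q - 1) * m powr (q - 2) * (1 * ((p - 1) * (\<bar>a\<bar> + 1) powr (p - 2) * d))"
      using s \<open>0 \<le> d\<close> q_gt_1 p_ge_2 by (intro mult_left_mono mult_right_mono) auto
    finally show "\<bar>phi_p q (flux_ratio f s) - phi_p q (flux_ratio g s)\<bar> \<le> C * d"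
      by (simp add: C_def mult_ac)
  qed (use \<open>0 < \<delta>0\<close> \<open>0 \<le> C\<close> in auto)
qed

text \<open>Here the flux ratio is bounded away from 0 only by a multiple of \<open>s - c\<close>; the factor
  \<open>s - c\<close> in abs_flux_ratio_diff_le compensates the growth of the Lipschitz constant of \<open>\<phi>\<^sub>q\<close>.\<close>

lemma phi_q_flux_ratio_lipschitz_flux_0:
  assumes "wc = 0" "a \<noteq> 0"
  obtains C where "0 \<le> C"
    "\<And>f g d s. c < s \<Longrightarrow> s \<le> c + 1 \<Longrightarrow> f \<in> tube c s a (\<bar>a\<bar> / 2) \<Longrightarrow> g \<in> tube c s a (\<bar>a\<bar> / 2) \<Longrightarrow>
      \<forall>\<tau>\<in>{c..s}. \<bar>f \<tau> - g \<tau>\<bar> \<le> d \<Longrightarrow>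
      \<bar>phi_p q (flux_ratio f s) - phi_p q (flux_ratio g s)\<bar> \<le> C * d"
proof -
  define M where "M = (\<bar>a\<bar> / 2) powr (p - 1) / \<theta>"
  define Lp where "Lp = (p - 1) * (\<bar>a\<bar> + \<bar>a\<bar> / 2) powr (p - 2)"
  have "0 < M" using assms(2) theta_ge_1 by (simp add: M_def)
  have "0 \<le> Lp" using p_ge_2 by (simp add: Lp_def)
  show thesis
  proof (rule that[of "(q - 1) * M powr (q - 2) * Lp"])
    fix f g d s
    assume s: "c < s" "s \<le> c + 1" and f: "f \<in> tube c s a (\<bar>a\<bar> / 2)" and g: "g \<in> tube c s a (\<bar>a\<bar> / 2)"
      and d: "\<forall>\<tau>\<in>{c..s}. \<bar>f \<tau> - g \<tau>\<bar> \<le> d"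
    define m where "m = M * (s - c)"
    have "0 < m" using \<open>0 < M\<close> s by (simp add: m_def)
    have "sgn a * flux_ratio f s \<le> - m" "sgn a * flux_ratio g s \<le> - m"
      using sgn_flux_ratio_le[OF assms s(1) f] sgn_flux_ratio_le[OF assms s(1) g]
      by (simp_all add: m_def M_def)
    then have side: "(m \<le> flux_ratio f s \<and> m \<le> flux_ratio g s) \<or>
        (flux_ratio f s \<le> - m \<and> flux_ratio g s \<le> - m)"
      using assms(2) by (cases "0 < a") auto
    have "0 \<le> d" using d s by force
    have "\<bar>phi_p q (flux_ratio f s) - phi_p q (flux_ratio g s)\<bar>
        \<le> (q - 1) * m powr (q - 2) * ((s - c) * (Lp * d))"
      using phi_q_flux_ratio_diff_le[OF s(1) \<open>0 < m\<close> f g d side] by (simp add: Lp_def)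
    also have "\<dots> = (q - 1) * (m powr (q - 2) * (s - c)) * (Lp * d)" by (simp add: mult_ac)
    also have "\<dots> \<le> (q - 1) * M powr (q - 2) * (Lp * d)"
      using powr_mult_self_le[of M "s - c" "q - 2"] \<open>0 < M\<close> s q_gt_1 \<open>0 \<le> Lp\<close> \<open>0 \<le> d\<close>
      unfolding m_def by (intro mult_right_mono mult_left_mono) auto
    finally show "\<bar>phi_p q (flux_ratio f s) - phi_p q (flux_ratio g s)\<bar> \<le> (q - 1) * M powr (q - 2) * Lp * d"
      by (simp add: mult_ac)
  qed (use q_gt_1 \<open>0 \<le> Lp\<close> in simp)
qed

lemma phi_q_flux_ratio_lipschitz:
  assumes "a \<noteq> 0 \<or> wc \<noteq> 0"
  obtains D \<delta> C where "0 < D" "0 < \<delta>" "\<delta> \<le> 1" "0 \<le> C"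
    "\<And>f g d s. c \<le> s \<Longrightarrow> s \<le> c + \<delta> \<Longrightarrow> f \<in> tube c s a D \<Longrightarrow> g \<in> tube c s a D \<Longrightarrow>
      \<forall>\<tau>\<in>{c..s}. \<bar>f \<tau> - g \<tau>\<bar> \<le> d \<Longrightarrow>
      \<bar>phi_p q (flux_ratio f s) - phi_p q (flux_ratio g s)\<bar> \<le> C * d"
proof -
  obtain D \<delta> C where DC: "0 < D" "0 < \<delta>" "\<delta> \<le> 1" "0 \<le> C"
    and lip: "\<And>f g d s. c < s \<Longrightarrow> s \<le> c + \<delta> \<Longrightarrow> f \<in> tube c s a D \<Longrightarrow> g \<in> tube c s a D \<Longrightarrow>
      \<forall>\<tau>\<in>{c..s}. \<bar>f \<tau> - g \<tau>\<bar> \<le> d \<Longrightarrow>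
      \<bar>phi_p q (flux_ratio f s) - phi_p q (flux_ratio g s)\<bar> \<le> C * d"
  proof (cases "wc = 0")
    case True
    then have "a \<noteq> 0" using assms by simp
    obtain C where "0 \<le> C" and "\<And>f g d s. c < s \<Longrightarrow> s \<le> c + 1 \<Longrightarrow>
        f \<in> tube c s a (\<bar>a\<bar> / 2) \<Longrightarrow> g \<in> tube c s a (\<bar>a\<bar> / 2) \<Longrightarrow>
        \<forall>\<tau>\<in>{c..s}. \<bar>f \<tau> - g \<tau>\<bar> \<le> d \<Longrightarrow>
        \<bar>phi_p q (flux_ratio f s) - phi_p q (flux_ratio g s)\<bar> \<le> C * d"
      using phi_q_flux_ratio_lipschitz_flux_0[OF True \<open>a \<noteq> 0\<close>] by blast
    then show thesis using \<open>a \<noteq> 0\<close> by (intro that[of "\<bar>a\<bar> / 2" 1 C]) auto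
  next
    case False
    obtain \<delta> C where "0 < \<delta>" "0 \<le> C" and "\<And>f g d s. c < s \<Longrightarrow> s \<le> c + \<delta> \<Longrightarrow>
        f \<in> tube c s a 1 \<Longrightarrow> g \<in> tube c s a 1 \<Longrightarrow> \<forall>\<tau>\<in>{c..s}. \<bar>f \<tau> - g \<tau>\<bar> \<le> d \<Longrightarrow>
        \<bar>phi_p q (flux_ratio f s) - phi_p q (flux_ratio g s)\<bar> \<le> C * d"
      using phi_q_flux_ratio_lipschitz_flux_ne_0[OF False] by blast
    then show thesis by (intro that[of 1 "min \<delta> 1" C]) auto
  qed
  show thesis
  proof (rule that[OF DC])
    fix f g d s assume "c \<le> s" "s \<le> c + \<delta>" "f \<in> tube c s a D" "g \<in> tube c s a D"
      and d: "\<forall>\<tau>\<in>{c..s}. \<bar>f \<tau> - g \<tau>\<bar> \<le> d"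
    show "\<bar>phi_p q (flux_ratio f s) - phi_p q (flux_ratio g s)\<bar> \<le> C * d"
    proof (cases "s = c")
      case True
      then show ?thesis using d DC(4) by (simp add: flux_ratio_def)
    qed (use lip \<open>c \<le> s\<close> \<open>s \<le> c + \<delta>\<close> \<open>f \<in> _\<close> \<open>g \<in> _\<close> d in auto)
  qed
qed

lemma abs_picard_sub_le:
  assumes "c \<le> t" "continuous_on {c..t} f" "\<And>s. s \<in> {c..t} \<Longrightarrow> \<bar>phi_p q (flux_ratio f s)\<bar> \<le> B"
  shows "\<bar>picard f t - a\<bar> \<le> B * (t - c)"
  unfolding picard_def using assms
  by (simp, intro abs_integral_le continuous_on_phi_p_q continuous_on_flux_ratio) auto

lemma abs_picard_diff_le:
  assumes "c \<le> t" "continuous_on {c..t} f" "continuous_on {c..t} g"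
    and "\<And>s. s \<in> {c..t} \<Longrightarrow> \<bar>phi_p q (flux_ratio f s) - phi_p q (flux_ratio g s)\<bar> \<le> B"
  shows "\<bar>picard f t - picard g t\<bar> \<le> B * (t - c)"
proof -
  have "continuous_on {c..t} (\<lambda>s. phi_p q (flux_ratio f s))" "continuous_on {c..t} (\<lambda>s. phi_p q (flux_ratio g s))"
    using assms(2,3) by (auto intro: continuous_on_phi_p_q continuous_on_flux_ratio)
  then have "picard f t - picard g t = integral {c..t} (\<lambda>s. phi_p q (flux_ratio f s) - phi_p q (flux_ratio g s))"
    unfolding picard_def by (simp add: integral_diff integrable_continuous_interval)
  also have "\<bar>\<dots>\<bar> \<le> B * (t - c)"
    using assms(1,4) \<open>continuous_on {c..t} (\<lambda>s. phi_p q (flux_ratio f s))\<close>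
      \<open>continuous_on {c..t} (\<lambda>s. phi_p q (flux_ratio g s))\<close>
    by (intro abs_integral_le continuous_on_diff) auto
  finally show ?thesis .
qed

lemma picard_in_tube:
  assumes "0 \<le> e" "e \<le> 1" "e * (1 + \<bar>wc\<bar> / \<rho> c + (\<bar>a\<bar> + D) powr (p - 1)) \<le> D"
    and f: "f \<in> tube c (c + e) a D"
  shows "picard f \<in> tube c (c + e) a D"
  unfolding tube_def
proof (intro CollectI conjI ballI)
  define B where "B = 1 + \<bar>wc\<bar> / \<rho> c + (\<bar>a\<bar> + D) powr (p - 1)"
  have cont: "continuous_on {c..c + e} f" using f by (simp add: tube_def)
  then show "continuous_on {c..c + e} (picard f)" by (rule continuous_on_picard)
  fix t assume t: "t \<in> {c..c + e}"
  have "\<bar>phi_p q (flux_ratio f s)\<bar> \<le> B" if s: "s \<in> {c..t}" for s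
  proof -
    have "\<bar>flux_ratio f s\<bar> \<le> \<bar>wc\<bar> / \<rho> c + (s - c) * (\<bar>a\<bar> + D) powr (p - 1)"
      using s t by (intro abs_flux_ratio_le tube_mono[OF f]) auto
    also have "\<dots> \<le> \<bar>wc\<bar> / \<rho> c + 1 * (\<bar>a\<bar> + D) powr (p - 1)"
      using s t assms(2) by (intro add_left_mono mult_right_mono) auto
    finally show ?thesis
      using abs_phi_p_le_1_plus[of q "flux_ratio f s"] q_gt_1 q_le_2 by (simp add: B_def)
  qed
  moreover have "continuous_on {c..t} f" by (rule continuous_on_subset[OF cont]) (use t in auto)
  ultimately have "\<bar>picard f t - a\<bar> \<le> B * (t - c)" using t by (intro abs_picard_sub_le) auto
  also have "\<dots> \<le> B * e" using t by (intro mult_left_mono) (auto simp: B_def weight_nonneg)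
  finally show "\<bar>picard f t - a\<bar> \<le> D" using assms(3) by (simp add: B_def mult.commute)
qed

lemma picard_contraction:
  assumes lip: "\<And>f g d s. c \<le> s \<Longrightarrow> s \<le> c + e \<Longrightarrow> f \<in> tube c s a D \<Longrightarrow> g \<in> tube c s a D \<Longrightarrow>
      \<forall>\<tau>\<in>{c..s}. \<bar>f \<tau> - g \<tau>\<bar> \<le> d \<Longrightarrow>
      \<bar>phi_p q (flux_ratio f s) - phi_p q (flux_ratio g s)\<bar> \<le> C * d"
    and fg: "f \<in> tube c (c + e) a D" "g \<in> tube c (c + e) a D"
    and d: "\<forall>t\<in>{c..c + e}. \<bar>f t - g t\<bar> \<le> d" and t: "t \<in> {c..c + e}"
  shows "\<bar>picard f t - picard g t\<bar> \<le> C * d * (t - c)"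
proof (rule abs_picard_diff_le)
  fix s assume s: "s \<in> {c..t}"
  then have "f \<in> tube c s a D" "g \<in> tube c s a D" "\<forall>\<tau>\<in>{c..s}. \<bar>f \<tau> - g \<tau>\<bar> \<le> d"
    using fg d t by (auto intro: tube_mono)
  then show "\<bar>phi_p q (flux_ratio f s) - phi_p q (flux_ratio g s)\<bar> \<le> C * d"
    using s t by (intro lip) auto
qed (use fg t in \<open>auto simp: tube_def intro: continuous_on_subset\<close>)

text \<open>The fixed point lives on \<open>[c, c + e\<^sub>0]\<close>; uniqueness is stated for every shorter interval,
  because a given solution is only known to stay in the tube for a short time.\<close>

lemma picard_fixed_point:
  assumes "a \<noteq> 0 \<or> wc \<noteq> 0"
  obtains D e0 where "0 < D" "0 < e0"
    "\<exists>u\<in>tube c (c + e0) a D. \<forall>t\<in>{c..c + e0}. picard u t = u t"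
    "\<And>e u v t. 0 < e \<Longrightarrow> e \<le> e0 \<Longrightarrow> u \<in> tube c (c + e) a D \<Longrightarrow> v \<in> tube c (c + e) a D \<Longrightarrow>
      \<forall>t\<in>{c..c + e}. picard u t = u t \<Longrightarrow> \<forall>t\<in>{c..c + e}. picard v t = v t \<Longrightarrow>
      t \<in> {c..c + e} \<Longrightarrow> u t = v t"
proof -
  obtain D \<delta> C where DC: "0 < D" "0 < \<delta>" "\<delta> \<le> 1" "0 \<le> C"
    and lip: "\<And>f g d s. c \<le> s \<Longrightarrow> s \<le> c + \<delta> \<Longrightarrow> f \<in> tube c s a D \<Longrightarrow> g \<in> tube c s a D \<Longrightarrow>
      \<forall>\<tau>\<in>{c..s}. \<bar>f \<tau> - g \<tau>\<bar> \<le> d \<Longrightarrow>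
      \<bar>phi_p q (flux_ratio f s) - phi_p q (flux_ratio g s)\<bar> \<le> C * d"
    using phi_q_flux_ratio_lipschitz[OF assms] by blast
  define B where "B = 1 + \<bar>wc\<bar> / \<rho> c + (\<bar>a\<bar> + D) powr (p - 1)"
  have "0 < B" by (simp add: B_def add_pos_nonneg weight_nonneg)
  obtain e0 where e0: "0 < e0" "e0 \<le> \<delta>" "e0 * B \<le> D" "e0 * C \<le> 1 / 2"
    using small_step_size[OF DC(2,1) \<open>0 < B\<close> DC(4)] by blast
  have maps_to: "picard f \<in> tube c (c + e) a D"
    if "0 < e" "e \<le> e0" "f \<in> tube c (c + e) a D" for e f
  proof (rule picard_in_tube)
    show "e * (1 + \<bar>wc\<bar> / \<rho> c + (\<bar>a\<bar> + D) powr (p - 1)) \<le> D"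
      using mult_right_mono[OF \<open>e \<le> e0\<close> less_imp_le[OF \<open>0 < B\<close>]] e0(3) by (simp add: B_def)
  qed (use that e0(2) DC(3) in auto)
  have contraction: "\<forall>t\<in>{c..c + e}. \<bar>picard f t - picard g t\<bar> \<le> 1 / 2 * d"
    if e: "0 < e" "e \<le> e0" and fg: "f \<in> tube c (c + e) a D" "g \<in> tube c (c + e) a D"
      and d: "\<forall>t\<in>{c..c + e}. \<bar>f t - g t\<bar> \<le> d" for e f g d
  proof
    fix t assume t: "t \<in> {c..c + e}"
    have "0 \<le> d" using e d by force
    have "\<bar>picard f t - picard g t\<bar> \<le> C * d * (t - c)"
      using lip e(2) e0(2) by (intro picard_contraction[OF _ fg d t]) auto
    also have "\<dots> \<le> C * d * e0" using t e(2) DC(4) \<open>0 \<le> d\<close> by (intro mult_left_mono) auto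
    also have "\<dots> \<le> 1 / 2 * d" using mult_right_mono[OF e0(4) \<open>0 \<le> d\<close>] by (simp add: mult_ac)
    finally show "\<bar>picard f t - picard g t\<bar> \<le> 1 / 2 * d" .
  qed
  show thesis
  proof (rule that[OF DC(1) e0(1)])
    show "\<exists>u\<in>tube c (c + e0) a D. \<forall>t\<in>{c..c + e0}. picard u t = u t"
      using e0(1) DC(1) maps_to contraction by (intro tube_contraction_fixed_point[of _ _ _ "1 / 2"]) auto
    show "u t = v t" if "0 < e" "e \<le> e0" "u \<in> tube c (c + e) a D" "v \<in> tube c (c + e) a D"
      "\<forall>t\<in>{c..c + e}. picard u t = u t" "\<forall>t\<in>{c..c + e}. picard v t = v t" "t \<in> {c..c + e}"
      for e u v t
      using that contraction[OF that(1,2)] by (intro tube_contraction_fixed_point_unique[of "1 / 2"]) auto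
  qed
qed

lemma picard_fixed_point_imp_solves_integral:
  assumes "continuous_on {c..E} u" "\<forall>t\<in>{c..E}. picard u t = u t" "c \<le> E"
  shows "solves_integral c E u (flux u)" "u c = a"
proof -
  show "u c = a" using assms(2,3) by force
  then have "u t = u c + integral {c..t} (\<lambda>s. phi_p q (flux u s / \<rho> s))" if "t \<in> {c..E}" for t
    using assms(2) that by (simp add: picard_def flux_ratio_def)
  moreover have "flux u t = flux u c + integral {c..t} (\<lambda>s. - (\<rho> s * phi_p p (u s)))" for t
    by (simp add: flux_def)
  moreover have "continuous_on {c..E} (\<lambda>s. phi_p q (flux u s / \<rho> s))"
    using continuous_on_phi_p_q[OF continuous_on_flux_ratio[OF assms(1)]] by (simp add: flux_ratio_def)
  ultimately show "solves_integral c E u (flux u)"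
    using assms(1) unfolding solves_integral_def by blast
qed

lemma solves_integral_eq_flux:
  assumes "solves_integral c E u w" "w c = wc" "t \<in> {c..E}"
  shows "w t = flux u t"
proof -
  have "w t = w c + integral {c..t} (\<lambda>s. - (\<rho> s * phi_p p (u s)))"
    using assms(1,3) unfolding solves_integral_def by blast
  then show ?thesis by (simp add: flux_def assms(2))
qed

lemma solves_integral_imp_picard_fixed_point:
  assumes "solves_integral c E u w" "u c = a" "w c = wc" "t \<in> {c..E}"
  shows "picard u t = u t"
proof -
  have u_eq: "u t = u c + integral {c..t} (\<lambda>s. phi_p q (w s / \<rho> s))"
    using assms(1,4) unfolding solves_integral_def by blast
  have "flux u s = w s" if "s \<in> {c..t}" for s
    using solves_integral_eq_flux[OF assms(1,3), of s] that assms(4) by simp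
  then have "integral {c..t} (\<lambda>s. phi_p q (flux_ratio u s)) = integral {c..t} (\<lambda>s. phi_p q (w s / \<rho> s))"
    by (intro integral_cong) (simp add: flux_ratio_def)
  then show ?thesis using u_eq assms(2) by (simp add: picard_def)
qed

end

section \<open>Local and global existence and uniqueness\<close>

context p_laplacian_ode
begin

lemma p_laplacian_ivpI: "0 \<le> c \<Longrightarrow> (\<rho> c = 0 \<Longrightarrow> wc = 0) \<Longrightarrow> p_laplacian_ivp p \<theta> c wc"
  by (intro p_laplacian_ivp.intro p_laplacian_ivp_axioms.intro p_laplacian_ode_axioms)

lemma local_existence:
  assumes "0 \<le> c" "\<rho> c = 0 \<Longrightarrow> wc = 0"
  obtains e u w where "0 < e" "solves c (c + e) u w" "u c = a" "w c = wc"
proof (cases "a = 0 \<and> wc = 0")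
  case True
  have "solves c (c + 1) (\<lambda>_. 0) (\<lambda>_. 0)" by (simp add: solves_def)
  then show thesis using True by (intro that[of 1]) auto
next
  case False
  interpret ivp: p_laplacian_ivp p \<theta> c a wc by (rule p_laplacian_ivpI[OF assms])
  have "a \<noteq> 0 \<or> wc \<noteq> 0" using False by simp
  then obtain D e0 where "0 < e0" and "\<exists>u\<in>tube c (c + e0) a D. \<forall>t\<in>{c..c + e0}. ivp.picard u t = u t"
    by (rule ivp.picard_fixed_point)
  then obtain u where "u \<in> tube c (c + e0) a D" "\<forall>t\<in>{c..c + e0}. ivp.picard u t = u t"
    by blast
  then have "solves_integral c (c + e0) u (ivp.flux u)" "u c = a"
    using ivp.picard_fixed_point_imp_solves_integral[of "c + e0" u] \<open>0 < e0\<close>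
    by (auto simp: tube_def)
  then show thesis
    using \<open>0 < e0\<close> assms(1) by (intro that[of e0 u "ivp.flux u"] solves_integral_imp_solves) auto
qed

lemma local_uniqueness:
  assumes S1: "solves c d u1 w1" and S2: "solves c d u2 w2" and "0 \<le> c" "c < d"
    and eq: "u1 c = u2 c" "w1 c = w2 c" and w0: "\<rho> c = 0 \<Longrightarrow> w1 c = 0"
  obtains e where "0 < e" "e \<le> d - c" "\<forall>t\<in>{c..c + e}. u1 t = u2 t \<and> w1 t = w2 t"
proof (cases "u1 c = 0 \<and> w1 c = 0")
  case True
  then show thesis
    using solves_zero_data[OF S1 \<open>0 \<le> c\<close>] solves_zero_data[OF S2 \<open>0 \<le> c\<close>] eq \<open>c < d\<close>
    by (intro that[of "d - c"]) auto
next
  case False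
  interpret ivp: p_laplacian_ivp p \<theta> c "u1 c" "w1 c" by (rule p_laplacian_ivpI[OF \<open>0 \<le> c\<close> w0])
  have "u1 c \<noteq> 0 \<or> w1 c \<noteq> 0" using False by simp
  then obtain D e0 where "0 < D" "0 < e0"
    and unique: "\<And>e u v t. 0 < e \<Longrightarrow> e \<le> e0 \<Longrightarrow> u \<in> tube c (c + e) (u1 c) D \<Longrightarrow>
      v \<in> tube c (c + e) (u1 c) D \<Longrightarrow> \<forall>t\<in>{c..c + e}. ivp.picard u t = u t \<Longrightarrow>
      \<forall>t\<in>{c..c + e}. ivp.picard v t = v t \<Longrightarrow> t \<in> {c..c + e} \<Longrightarrow> u t = v t"
    by (rule ivp.picard_fixed_point) blast
  obtain e1 where "0 < e1" "e1 \<le> d - c" "u1 \<in> tube c (c + e1) (u1 c) D"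
    using in_tube_near_start[OF solves_continuous_on(1)[OF S1] \<open>0 < D\<close> \<open>c < d\<close>] by blast
  obtain e2 where "0 < e2" "e2 \<le> d - c" "u2 \<in> tube c (c + e2) (u1 c) D"
    using in_tube_near_start[OF solves_continuous_on(1)[OF S2] \<open>0 < D\<close> \<open>c < d\<close>] eq by auto
  define e where "e = min e0 (min e1 e2)"
  have e: "0 < e" "e \<le> e0" "e \<le> d - c" "u1 \<in> tube c (c + e) (u1 c) D" "u2 \<in> tube c (c + e) (u1 c) D"
    using \<open>0 < e0\<close> \<open>0 < e1\<close> \<open>0 < e2\<close> \<open>e1 \<le> d - c\<close> tube_mono[OF \<open>u1 \<in> _\<close>, of "c + e"]
      tube_mono[OF \<open>u2 \<in> _\<close>, of "c + e"] by (auto simp: e_def)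
  have "solves_integral c (c + e) u1 w1" "solves_integral c (c + e) u2 w2"
    using solves_subset[OF S1, of c "c + e"] solves_subset[OF S2, of c "c + e"] e(3) \<open>0 \<le> c\<close> w0 eq
    by (auto intro!: solves_imp_solves_integral)
  then have I: "solves_integral c (c + e) u1 w1" "solves_integral c (c + e) u2 w2"
    and fixed: "\<forall>t\<in>{c..c + e}. ivp.picard u1 t = u1 t" "\<forall>t\<in>{c..c + e}. ivp.picard u2 t = u2 t"
    using ivp.solves_integral_imp_picard_fixed_point eq by auto
  have u: "u1 t = u2 t" if "t \<in> {c..c + e}" for t
    by (rule unique[OF e(1,2,4,5) fixed that])
  have "w1 t = w2 t" if "t \<in> {c..c + e}" for t
    using ivp.solves_integral_eq_flux[OF I(1) _ that] ivp.solves_integral_eq_flux[OF I(2) _ that] eq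
      ivp.flux_cong[of t u1 u2] u that by auto
  then show thesis using e(1,3) u by (intro that[of e]) auto
qed

lemma solves_unique:
  assumes S1: "solves c d u1 w1" and S2: "solves c d u2 w2" and "0 \<le> c"
    and eq: "u1 c = u2 c" "w1 c = w2 c" and w0: "\<rho> c = 0 \<Longrightarrow> w1 c = 0"
    and t: "t \<in> {c..d}"
  shows "u1 t = u2 t \<and> w1 t = w2 t"
proof -
  define P where "P T \<longleftrightarrow> (T \<le> d \<longrightarrow> u1 T = u2 T \<and> w1 T = w2 T)" for T
  have "P t"
  proof (rule real_induct_atLeast[of P c])
    show "P c" using eq by (simp add: P_def)
    show "P T" if "c < T" and below: "\<And>R. c \<le> R \<Longrightarrow> R < T \<Longrightarrow> P R" for T
    proof (clarsimp simp: P_def)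
      assume "T \<le> d"
      then have "{c..T} \<subseteq> {c..d}" by auto
      then have "continuous_on {c..T} u1" "continuous_on {c..T} u2" "continuous_on {c..T} w1"
        "continuous_on {c..T} w2"
        using solves_continuous_on[OF S1] solves_continuous_on[OF S2] continuous_on_subset by blast+
      moreover have "u1 R = u2 R" "w1 R = w2 R" if "R \<in> {c..<T}" for R
        using below[of R] that \<open>T \<le> d\<close> by (auto simp: P_def)
      ultimately show "u1 T = u2 T \<and> w1 T = w2 T"
        using \<open>c < T\<close> by (auto intro: continuous_on_agree_at_right_end)
    qed
    show "\<exists>e>0. \<forall>R\<in>{T..T + e}. P R" if "c \<le> T" and upto: "\<And>R. c \<le> R \<Longrightarrow> R \<le> T \<Longrightarrow> P R" for T
    proof (cases "T < d")
      case True
      have "\<rho> T = 0 \<Longrightarrow> w1 T = 0" using w0 weight_eq_0_at[OF \<open>0 \<le> c\<close> \<open>c \<le> T\<close>] by auto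
      moreover have "u1 T = u2 T" "w1 T = w2 T" using upto[of T] True \<open>c \<le> T\<close> by (auto simp: P_def)
      moreover have "solves T d u1 w1" "solves T d u2 w2"
        using solves_subset[OF S1 \<open>c \<le> T\<close> order_refl] solves_subset[OF S2 \<open>c \<le> T\<close> order_refl] .
      moreover have "0 \<le> T" using \<open>0 \<le> c\<close> \<open>c \<le> T\<close> by linarith
      ultimately obtain e where "0 < e" "e \<le> d - T" "\<forall>t\<in>{T..T + e}. u1 t = u2 t \<and> w1 t = w2 t"
        using local_uniqueness[of T d u1 w1 u2 w2] True by blast
      then show ?thesis by (auto simp: P_def)
    next
      case False
      have "P R" if "T \<le> R" for R
        using upto[of T] \<open>c \<le> T\<close> False that by (cases "R = T") (auto simp: P_def)
      then show ?thesis by (intro exI[of _ 1]) auto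
    qed
  qed (use t in simp)
  then show ?thesis using t by (simp add: P_def)
qed

lemma solves_agree:
  assumes "solves r0 R u w" "solves r0 R' u' w'" "0 \<le> r0"
    and "u r0 = u' r0" "w r0 = w' r0" "\<rho> r0 = 0 \<Longrightarrow> w r0 = 0"
    and "t \<in> {r0..R}" "t \<le> R'"
  shows "u t = u' t \<and> w t = w' t"
proof -
  have "solves r0 (min R R') u w" "solves r0 (min R R') u' w'"
    using solves_subset[OF assms(1)] solves_subset[OF assms(2)] by auto
  from solves_unique[OF this assms(3-6)] show ?thesis using assms(7,8) by auto
qed

lemma solves_integral_glue:
  assumes I1: "solves_integral c m u1 w1" and I2: "solves_integral m d u2 w2"
    and "0 \<le> c" "c \<le> m" "m \<le> d" and eq: "u1 m = u2 m" "w1 m = w2 m"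
  shows "solves_integral c d (\<lambda>t. if t \<le> m then u1 t else u2 t) (\<lambda>t. if t \<le> m then w1 t else w2 t)"
    (is "solves_integral c d ?u ?w")
proof -
  have c1: "continuous_on {c..m} u1" "continuous_on {c..m} (\<lambda>s. phi_p q (w1 s / \<rho> s))"
    and u1: "\<And>t. t \<in> {c..m} \<Longrightarrow> u1 t = u1 c + integral {c..t} (\<lambda>s. phi_p q (w1 s / \<rho> s))"
    and w1: "\<And>t. t \<in> {c..m} \<Longrightarrow> w1 t = w1 c + integral {c..t} (\<lambda>s. - (\<rho> s * phi_p p (u1 s)))"
    using I1 unfolding solves_integral_def by blast+
  have c2: "continuous_on {m..d} u2" "continuous_on {m..d} (\<lambda>s. phi_p q (w2 s / \<rho> s))"
    and u2: "\<And>t. t \<in> {m..d} \<Longrightarrow> u2 t = u2 m + integral {m..t} (\<lambda>s. phi_p q (w2 s / \<rho> s))"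
    and w2: "\<And>t. t \<in> {m..d} \<Longrightarrow> w2 t = w2 m + integral {m..t} (\<lambda>s. - (\<rho> s * phi_p p (u2 s)))"
    using I2 unfolding solves_integral_def by blast+
  have cu: "continuous_on {c..d} ?u"
    and "continuous_on {c..d} (\<lambda>s. if s \<le> m then phi_p q (w1 s / \<rho> s) else phi_p q (w2 s / \<rho> s))"
    using c1 c2 eq \<open>c \<le> m\<close> \<open>m \<le> d\<close> by (auto intro!: continuous_on_Icc_glue)
  then have cw: "continuous_on {c..d} (\<lambda>s. phi_p q (?w s / \<rho> s))"
    by (elim continuous_on_eq) auto
  have cs: "continuous_on {c..d} (\<lambda>s. - (\<rho> s * phi_p p (?u s)))"
    by (intro continuous_on_minus continuous_on_mult continuous_on_weight_Icc[OF \<open>0 \<le> c\<close>]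
        continuous_on_phi_p_p cu)
  have g: "\<And>s. s \<in> {c..m} \<Longrightarrow> phi_p q (?w s / \<rho> s) = phi_p q (w1 s / \<rho> s)"
    "\<And>s. s \<in> {m..d} \<Longrightarrow> phi_p q (?w s / \<rho> s) = phi_p q (w2 s / \<rho> s)"
    "\<And>s. s \<in> {c..m} \<Longrightarrow> - (\<rho> s * phi_p p (?u s)) = - (\<rho> s * phi_p p (u1 s))"
    "\<And>s. s \<in> {m..d} \<Longrightarrow> - (\<rho> s * phi_p p (?u s)) = - (\<rho> s * phi_p p (u2 s))"
    using eq by auto
  have "?u c = u1 c" "?w c = w1 c" using \<open>c \<le> m\<close> by simp_all
  then have "?u t = ?u c + integral {c..t} (\<lambda>s. phi_p q (?w s / \<rho> s))"
    "?w t = ?w c + integral {c..t} (\<lambda>s. - (\<rho> s * phi_p p (?u s)))" if "t \<in> {c..d}" for t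
    using integral_equation_glue[OF \<open>c \<le> m\<close> cw g(1,2) u1 u2 eq(1) that]
      integral_equation_glue[OF \<open>c \<le> m\<close> cs g(3,4) w1 w2 eq(2) that] by simp_all
  then show ?thesis using cu cw unfolding solves_integral_def by blast
qed

lemma solves_extend:
  assumes S: "solves r0 R u w" and "0 \<le> r0" "r0 \<le> R" and w0: "\<rho> r0 = 0 \<Longrightarrow> w r0 = 0"
  obtains e u' w' where "0 < e" "solves r0 (R + e) u' w'" "u' r0 = u r0" "w' r0 = w r0"
proof -
  have "0 \<le> R" "\<rho> R = 0 \<Longrightarrow> w R = 0"
    using w0 weight_eq_0_at[OF \<open>0 \<le> r0\<close> \<open>r0 \<le> R\<close>] \<open>0 \<le> r0\<close> \<open>r0 \<le> R\<close> by auto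
  then obtain e u2 w2 where "0 < e" "solves R (R + e) u2 w2" "u2 R = u R" "w2 R = w R"
    by (rule local_existence)
  then have "solves_integral r0 (R + e) (\<lambda>t. if t \<le> R then u t else u2 t) (\<lambda>t. if t \<le> R then w t else w2 t)"
    using \<open>0 \<le> r0\<close> \<open>r0 \<le> R\<close> \<open>0 \<le> R\<close> \<open>\<rho> R = 0 \<Longrightarrow> w R = 0\<close>
    by (intro solves_integral_glue solves_imp_solves_integral[OF S] solves_imp_solves_integral w0) auto
  then have "solves r0 (R + e) (\<lambda>t. if t \<le> R then u t else u2 t) (\<lambda>t. if t \<le> R then w t else w2 t)"
    using \<open>0 \<le> r0\<close> by (rule solves_integral_imp_solves)
  then show thesis
    using \<open>0 < e\<close> \<open>r0 \<le> R\<close>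
    by (intro that[of e "\<lambda>t. if t \<le> R then u t else u2 t" "\<lambda>t. if t \<le> R then w t else w2 t"]) auto
qed

lemma solves_patch:
  assumes "0 \<le> r0" "\<rho> r0 = 0 \<Longrightarrow> w0 = 0" "\<And>R. R \<in> I \<Longrightarrow> r0 \<le> R"
    and ex: "\<And>R. R \<in> I \<Longrightarrow> \<exists>u w. solves r0 R u w \<and> u r0 = h0 \<and> w r0 = w0"
  obtains U W where "\<And>R. R \<in> I \<Longrightarrow> solves r0 R U W \<and> U r0 = h0 \<and> W r0 = w0"
proof -
  define sol where "sol R = (SOME (u, w). solves r0 R u w \<and> u r0 = h0 \<and> w r0 = w0)" for R
  have sol: "solves r0 R (fst (sol R)) (snd (sol R)) \<and> fst (sol R) r0 = h0 \<and> snd (sol R) r0 = w0"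
    if R: "R \<in> I" for R
  proof -
    obtain u w where "solves r0 R u w \<and> u r0 = h0 \<and> w r0 = w0" using ex[OF R] by blast
    then show ?thesis
      using someI[of "\<lambda>(u, w). solves r0 R u w \<and> u r0 = h0 \<and> w r0 = w0" "(u, w)"]
      by (simp add: sol_def case_prod_beta)
  qed
  define R_of where "R_of t = (SOME R. R \<in> I \<and> t \<le> R)" for t
  define U where "U t = fst (sol (R_of t)) t" for t
  define W where "W t = snd (sol (R_of t)) t" for t
  have agree: "U t = fst (sol R) t \<and> W t = snd (sol R) t" if "R \<in> I" "t \<in> {r0..R}" for R t
  proof -
    have R_of: "R_of t \<in> I \<and> t \<le> R_of t"
      unfolding R_of_def by (rule someI[of _ R]) (use that in auto)
    show ?thesis
      unfolding U_def W_def using that R_of sol[of R] sol[of "R_of t"] assms(1,2)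
      by (intro solves_agree[of r0 "R_of t" _ _ R]) auto
  qed
  show thesis
  proof (rule that)
    fix R assume "R \<in> I"
    then show "solves r0 R U W \<and> U r0 = h0 \<and> W r0 = w0"
      using sol[of R] agree[of R] assms(3)[of R] by (auto intro: solves_cong)
  qed
qed

lemma continuous_on_flux_ratio_extend:
  assumes "0 \<le> r0" "r0 < m" "m \<le> T" "continuous_on {r0..m} (\<lambda>s. w s / \<rho> s)"
    and "continuous_on {r0..T} w'" "\<And>t. t \<in> {r0..m} \<Longrightarrow> w' t = w t"
  shows "continuous_on {r0..T} (\<lambda>s. w' s / \<rho> s)"
proof -
  have "continuous_on {r0..m} (\<lambda>s. w' s / \<rho> s)"
    using assms(4) by (rule continuous_on_eq) (use assms(6) in auto)
  moreover have "\<rho> s \<noteq> 0" if "s \<in> {m..T}" for s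
    using weight_pos[of s \<theta>] that assms(1,2) by auto
  then have "continuous_on {m..T} (\<lambda>s. w' s / \<rho> s)"
    using assms(1,2)
    by (intro continuous_on_divide continuous_on_subset[OF assms(5)] continuous_on_weight_Icc) auto
  ultimately have "continuous_on ({r0..m} \<union> {m..T}) (\<lambda>s. w' s / \<rho> s)"
    by (intro continuous_on_closed_Un) auto
  moreover have "{r0..m} \<union> {m..T} = {r0..T}" using assms(2,3) by auto
  ultimately show ?thesis by simp
qed

lemma solves_integral_at_endpoint:
  assumes "0 \<le> r0" "r0 < T" and S: "\<And>R. r0 \<le> R \<Longrightarrow> R < T \<Longrightarrow> solves r0 R u w"
    and w0: "\<rho> r0 = 0 \<Longrightarrow> w r0 = 0"
    and cu: "continuous_on {r0..T} u'" and cw: "continuous_on {r0..T} w'"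
    and agree: "\<And>t. t \<in> {r0..<T} \<Longrightarrow> u' t = u t \<and> w' t = w t"
  shows "solves_integral r0 T u' w'"
proof -
  define m where "m = (r0 + T) / 2"
  have m: "r0 < m" "m < T" using assms(2) by (auto simp: m_def)
  have ratio: "continuous_on {r0..T} (\<lambda>s. phi_p q (w' s / \<rho> s))"
    using continuous_on_solves_ratio[OF S[of m] assms(1) w0] m agree
    by (intro continuous_on_phi_p_q continuous_on_flux_ratio_extend[OF assms(1) m(1) _ _ cw]) auto
  have source: "continuous_on {r0..T} (\<lambda>s. - (\<rho> s * phi_p p (u' s)))"
    by (intro continuous_on_minus continuous_on_mult continuous_on_weight_Icc[OF assms(1)]
        continuous_on_phi_p_p cu)
  have before_T: "u' t = u' r0 + integral {r0..t} (\<lambda>s. phi_p q (w' s / \<rho> s)) \<and>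
      w' t = w' r0 + integral {r0..t} (\<lambda>s. - (\<rho> s * phi_p p (u' s)))" if t: "t \<in> {r0..<T}" for t
  proof -
    have "solves_integral r0 t u w"
      using t assms(1) w0 by (intro solves_imp_solves_integral S) auto
    moreover have "t \<in> {r0..t}" using t by simp
    ultimately have "u t = u r0 + integral {r0..t} (\<lambda>s. phi_p q (w s / \<rho> s))"
      "w t = w r0 + integral {r0..t} (\<lambda>s. - (\<rho> s * phi_p p (u s)))"
      unfolding solves_integral_def by blast+
    moreover have "integral {r0..t} (\<lambda>s. phi_p q (w' s / \<rho> s)) = integral {r0..t} (\<lambda>s. phi_p q (w s / \<rho> s))"
      "integral {r0..t} (\<lambda>s. - (\<rho> s * phi_p p (u' s))) = integral {r0..t} (\<lambda>s. - (\<rho> s * phi_p p (u s)))"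
      using agree t by (auto intro!: integral_cong)
    moreover have "u' t = u t" "w' t = w t" "u' r0 = u r0" "w' r0 = w r0" using agree t assms(2) by auto
    ultimately show ?thesis by simp
  qed
  show ?thesis
    unfolding solves_integral_def
  proof (intro conjI ballI cu ratio)
    fix t assume t: "t \<in> {r0..T}"
    show "u' t = u' r0 + integral {r0..t} (\<lambda>s. phi_p q (w' s / \<rho> s))"
      by (rule integral_equation_at_right_end[OF assms(2) cu ratio _ t]) (use before_T in blast)
    show "w' t = w' r0 + integral {r0..t} (\<lambda>s. - (\<rho> s * phi_p p (u' s)))"
      by (rule integral_equation_at_right_end[OF assms(2) cw source _ t]) (use before_T in blast)
  qed
qed

lemma solves_limit:
  assumes "0 \<le> r0" "r0 < T" "\<rho> r0 = 0 \<Longrightarrow> w0 = 0"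
    and ex: "\<And>R. r0 \<le> R \<Longrightarrow> R < T \<Longrightarrow> \<exists>u w. solves r0 R u w \<and> u r0 = h0 \<and> w r0 = w0"
  shows "\<exists>u w. solves r0 T u w \<and> u r0 = h0 \<and> w r0 = w0"
proof -
  obtain U W where UW: "\<And>R. R \<in> {r0..<T} \<Longrightarrow> solves r0 R U W \<and> U r0 = h0 \<and> W r0 = w0"
    using solves_patch[OF assms(1,3), of "{r0..<T}" h0] ex by auto
  have data: "U r0 = h0" "W r0 = w0" using UW[of r0] assms(2) by auto
  have W0: "\<rho> r0 = 0 \<Longrightarrow> W r0 = 0" using assms(3) data by simp
  define LU where "LU = 1 + max 1 (q * energy U W r0)"
  define LW where "LW = \<rho> T * max 1 (p * energy U W r0) powr (p - 1)"
  have "dist (U s) (U t) \<le> LU * dist s t \<and> dist (W s) (W t) \<le> LW * dist s t"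
    if st: "s \<in> {r0..<T}" "t \<in> {r0..<T}" for s t
  proof -
    define R where "R = max s t"
    have S: "solves r0 R U W" using UW[of R] st by (auto simp: R_def)
    have "\<rho> R \<le> \<rho> T" using weight_mono[OF theta_ge_1, of R T] assms(1) st by (auto simp: R_def)
    then have "\<rho> R * max 1 (p * energy U W r0) powr (p - 1) \<le> LW"
      unfolding LW_def by (rule mult_right_mono) simp
    then have "LU-lipschitz_on {r0..R} U" "LW-lipschitz_on {r0..R} W"
      using solves_lipschitz(1)[OF S assms(1) W0] solves_lipschitz(2)[OF S assms(1) W0]
      by (auto simp: LU_def intro: lipschitz_on_mono)
    then show ?thesis using st by (auto simp: R_def intro!: lipschitz_onD)
  qed
  then have "LU-lipschitz_on {r0..<T} U" "LW-lipschitz_on {r0..<T} W"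
    by (auto intro!: lipschitz_onI simp: LU_def LW_def weight_nonneg)
  then obtain u' w' where "LU-lipschitz_on {r0..T} u'" "\<forall>t\<in>{r0..<T}. u' t = U t"
    "LW-lipschitz_on {r0..T} w'" "\<forall>t\<in>{r0..<T}. w' t = W t"
    using lipschitz_extend_closure[of LU "{r0..<T}" U] lipschitz_extend_closure[of LW "{r0..<T}" W]
      assms(2) by auto
  then have "solves_integral r0 T u' w'"
    using assms(1,2) UW W0
    by (intro solves_integral_at_endpoint[of r0 T U W]) (auto intro: lipschitz_on_continuous_on)
  then have "solves r0 T u' w'" using assms(1) by (rule solves_integral_imp_solves)
  moreover have "u' r0 = h0" "w' r0 = w0"
    using \<open>\<forall>t\<in>{r0..<T}. u' t = U t\<close> \<open>\<forall>t\<in>{r0..<T}. w' t = W t\<close> data assms(2) by auto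
  ultimately show ?thesis by blast
qed

lemma solves_exists:
  assumes "0 \<le> r0" "\<rho> r0 = 0 \<Longrightarrow> w0 = 0" "r0 \<le> R"
  shows "\<exists>u w. solves r0 R u w \<and> u r0 = h0 \<and> w r0 = w0"
proof (rule real_induct_atLeast[of "\<lambda>R. \<exists>u w. solves r0 R u w \<and> u r0 = h0 \<and> w r0 = w0" r0])
  obtain e u w where "0 < e" "solves r0 (r0 + e) u w" "u r0 = h0" "w r0 = w0"
    using local_existence[OF assms(1,2)] .
  then show "\<exists>u w. solves r0 r0 u w \<and> u r0 = h0 \<and> w r0 = w0"
    using solves_subset[of r0 "r0 + e" u w r0 r0] by auto
next
  fix T assume "r0 \<le> T" and "\<And>R. r0 \<le> R \<Longrightarrow> R \<le> T \<Longrightarrow> \<exists>u w. solves r0 R u w \<and> u r0 = h0 \<and> w r0 = w0"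
  then obtain u w where "solves r0 T u w" "u r0 = h0" "w r0 = w0" by blast
  then obtain e u' w' where "0 < e" "solves r0 (T + e) u' w'" "u' r0 = h0" "w' r0 = w0"
    using solves_extend[OF _ assms(1) \<open>r0 \<le> T\<close>] assms(2) by metis
  moreover have "solves r0 R u' w'" if "R \<in> {T..T + e}" for R
    using solves_subset[OF \<open>solves r0 (T + e) u' w'\<close>, of r0 R] that by auto
  ultimately show "\<exists>e>0. \<forall>R\<in>{T..T + e}. \<exists>u w. solves r0 R u w \<and> u r0 = h0 \<and> w r0 = w0"
    by blast
qed (use assms solves_limit in auto)

lemma C1_with_deriv_of_solves:
  assumes S: "\<And>R. r0 \<le> R \<Longrightarrow> solves r0 R u w" and "0 \<le> r0" "\<rho> r0 = 0 \<Longrightarrow> w r0 = 0"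
  shows "C1_with_deriv {r0..} u (\<lambda>x. phi_p q (w x / \<rho> x))"
    and "C1_with_deriv {r0..} w (\<lambda>x. - (\<rho> x * phi_p p (u x)))"
proof -
  have within: "at x within {r0..x + 1} = at x within {r0..}" for x
    by (rule at_within_Icc_eq_atLeast) simp
  have du: "(u has_real_derivative phi_p q (w x / \<rho> x)) (at x within {r0..})"
    and dw: "(w has_real_derivative - (\<rho> x * phi_p p (u x))) (at x within {r0..})"
    if "x \<in> {r0..}" for x
    using S[of "x + 1"] that unfolding solves_def within[symmetric] by auto
  have "continuous (at x within {r0..}) (\<lambda>x. phi_p q (w x / \<rho> x))" if "x \<in> {r0..}" for x
  proof -
    have "continuous_on {r0..x + 1} (\<lambda>x. phi_p q (w x / \<rho> x))"
      using S[of "x + 1"] that assms(2,3) by (intro continuous_on_phi_p_q continuous_on_solves_ratio) auto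
    then show ?thesis using that by (simp add: continuous_on_eq_continuous_within within[symmetric])
  qed
  then show "C1_with_deriv {r0..} u (\<lambda>x. phi_p q (w x / \<rho> x))"
    using du by (simp add: C1_with_deriv_def continuous_on_eq_continuous_within)
  have "continuous_on {r0..} u" using du by (rule DERIV_continuous_on)
  then have "continuous_on {r0..} (\<lambda>x. - (\<rho> x * phi_p p (u x)))"
    using continuous_on_subset[OF continuous_on_weight[OF theta_ge_1], of "{r0..}"] assms(2)
    by (intro continuous_on_minus continuous_on_mult continuous_on_phi_p_p) auto
  then show "C1_with_deriv {r0..} w (\<lambda>x. - (\<rho> x * phi_p p (u x)))"
    using dw by (simp add: C1_with_deriv_def)
qed

lemma solves_of_is_solution:
  assumes "is_solution p \<theta> r0 h0 h0' \<phi>" "0 \<le> r0" "r0 = 0 \<longrightarrow> h0' = 0"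
  obtains w where "\<And>R. solves r0 R \<phi> w" "\<phi> r0 = h0" "w r0 = \<rho> r0 * phi_p p h0'"
proof -
  obtain \<phi>' g' where d\<phi>: "C1_with_deriv {r0..} \<phi> \<phi>'"
    and dw: "C1_with_deriv {r0..} (\<lambda>t. \<rho> t * phi_p p (\<phi>' t)) g'"
    and eq: "\<forall>t\<ge>r0. g' t + \<rho> t * phi_p p (\<phi> t) = 0" and init: "\<phi> r0 = h0" "\<phi>' r0 = h0'"
    using assms(1) unfolding is_solution_def by blast
  have \<phi>'_eq: "\<phi>' t = phi_p q (\<rho> t * phi_p p (\<phi>' t) / \<rho> t)" if "r0 \<le> t" for t
  proof (cases "\<rho> t = 0")
    case True
    then have "t = r0" "r0 = 0" using weight_eq_0_at[OF assms(2) that] weight_eq_0_imp[of t \<theta>] assms(2) that by auto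
    then show ?thesis using init assms(3) by simp
  qed simp
  have "solves r0 R \<phi> (\<lambda>t. \<rho> t * phi_p p (\<phi>' t))" for R
    unfolding solves_def
  proof (intro ballI conjI)
    fix t assume t: "t \<in> {r0..R}"
    then have "t \<in> {r0..}" by simp
    have "(\<phi> has_real_derivative \<phi>' t) (at t within {r0..R})"
      using d\<phi> \<open>t \<in> {r0..}\<close> unfolding C1_with_deriv_def by (auto intro: DERIV_subset)
    then show "(\<phi> has_real_derivative phi_p q (\<rho> t * phi_p p (\<phi>' t) / \<rho> t)) (at t within {r0..R})"
      using \<phi>'_eq[of t] t by simp
    have "((\<lambda>t. \<rho> t * phi_p p (\<phi>' t)) has_real_derivative g' t) (at t within {r0..})"
      using dw \<open>t \<in> {r0..}\<close> unfolding C1_with_deriv_def by blast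
    then have "((\<lambda>t. \<rho> t * phi_p p (\<phi>' t)) has_real_derivative g' t) (at t within {r0..R})"
      by (rule DERIV_subset) auto
    moreover have "g' t = - (\<rho> t * phi_p p (\<phi> t))" using eq t by (simp add: eq_neg_iff_add_eq_0)
    ultimately show "((\<lambda>t. \<rho> t * phi_p p (\<phi>' t)) has_real_derivative - (\<rho> t * phi_p p (\<phi> t)))
        (at t within {r0..R})" by simp
  qed
  then show thesis using init by (intro that[of "\<lambda>t. \<rho> t * phi_p p (\<phi>' t)"]) auto
qed

lemma is_solution_unique:
  assumes "0 \<le> r0" "r0 = 0 \<longrightarrow> h0' = 0"
    and "is_solution p \<theta> r0 h0 h0' \<phi>" "is_solution p \<theta> r0 h0 h0' \<psi>" "r0 \<le> r"
  shows "\<phi> r = \<psi> r"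
proof -
  obtain w1 where "\<And>R. solves r0 R \<phi> w1" "\<phi> r0 = h0" "w1 r0 = \<rho> r0 * phi_p p h0'"
    using solves_of_is_solution[OF assms(3,1,2)] by blast
  moreover obtain w2 where "\<And>R. solves r0 R \<psi> w2" "\<psi> r0 = h0" "w2 r0 = \<rho> r0 * phi_p p h0'"
    using solves_of_is_solution[OF assms(4,1,2)] by blast
  ultimately show ?thesis using solves_unique[of r0 r \<phi> w1 \<psi> w2 r] assms(1,5) by auto
qed

lemma is_solution_of_solves:
  assumes "0 \<le> r0" "r0 = 0 \<longrightarrow> h0' = 0"
    and S: "\<And>R. r0 \<le> R \<Longrightarrow> solves r0 R u w" and "u r0 = h0" "w r0 = \<rho> r0 * phi_p p h0'"
  shows "is_solution p \<theta> r0 h0 h0' u"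
proof -
  define u' where "u' x = phi_p q (w x / \<rho> x)" for x
  have w0: "\<rho> r0 = 0 \<Longrightarrow> w r0 = 0" using assms(5) by simp
  have flux: "\<rho> x * phi_p p (u' x) = w x" if "x \<in> {r0..}" for x
  proof (cases "\<rho> x = 0")
    case True
    then have "x = r0" using weight_eq_0_at[OF assms(1)] that by auto
    then show ?thesis using True w0 by simp
  qed (simp add: u'_def)
  have C1w: "C1_with_deriv {r0..} (\<lambda>x. \<rho> x * phi_p p (u' x)) (\<lambda>x. - (\<rho> x * phi_p p (u x)))"
    by (rule C1_with_deriv_cong[where f = w]) (use C1_with_deriv_of_solves(2)[OF S assms(1) w0] flux in auto)
  have C1u: "C1_with_deriv {r0..} u u'"
    using C1_with_deriv_of_solves(1)[OF S assms(1) w0] by (simp add: u'_def[abs_def])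
  have "u' r0 = h0'"
  proof (cases "\<rho> r0 = 0")
    case True
    then have "r0 = 0" using weight_eq_0_imp[OF assms(1)] by blast
    then show ?thesis using True assms(2,5) by (simp add: u'_def)
  qed (simp add: u'_def assms(5))
  show ?thesis
    unfolding is_solution_def
    by (rule exI[of _ u'], rule exI[of _ "\<lambda>x. - (\<rho> x * phi_p p (u x))"])
      (use C1u C1w \<open>u' r0 = h0'\<close> assms(4) in auto)
qed

lemma is_solution_exists:
  assumes "0 \<le> r0" "r0 = 0 \<longrightarrow> h0' = 0"
  shows "\<exists>\<phi>. is_solution p \<theta> r0 h0 h0' \<phi>"
proof -
  have w0: "\<rho> r0 = 0 \<Longrightarrow> \<rho> r0 * phi_p p h0' = 0" by simp
  obtain u w where "\<And>R. R \<in> {r0..} \<Longrightarrow> solves r0 R u w \<and> u r0 = h0 \<and> w r0 = \<rho> r0 * phi_p p h0'"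
    using solves_patch[OF assms(1) w0, of "{r0..}" h0] solves_exists[OF assms(1) w0] by auto
  then have "is_solution p \<theta> r0 h0 h0' u" by (intro is_solution_of_solves[OF assms, of u w]) auto
  then show ?thesis by blast
qed

end

theorem mainTheorem16:
  fixes p \<theta> r0 h0 h0' :: real
  assumes "p \<ge> 2" and "\<theta> \<ge> 1" and "r0 \<ge> 0"
    and "r0 = 0 \<longrightarrow> h0' = 0"
  shows "(\<exists>\<phi>. is_solution p \<theta> r0 h0 h0' \<phi>) \<and>
         (\<forall>\<phi> \<psi>. is_solution p \<theta> r0 h0 h0' \<phi> \<longrightarrow> is_solution p \<theta> r0 h0 h0' \<psi> \<longrightarrow>
             (\<forall>r\<ge>r0. \<phi> r = \<psi> r))"
proof -
  interpret p_laplacian_ode p \<theta> using assms(1,2) by unfold_locales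
  show ?thesis using is_solution_exists[OF assms(3,4)] is_solution_unique[OF assms(3,4)] by blast
qed

end
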